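(* Assume that $w^+,w^-$ are Hölder continuous of a common order $\alpha\in(0,1]$ with constant $H>0$, that there exists $\gamma\le\alpha$ with $\int_0^\infty P(u^+(X)>z)^{\gamma}dz<\infty$ and $\int_0^\infty P(u^-(X)>z)^{\gamma}dz<\infty$, that $u^+,u^-$ are continuous and strictly increasing on the relevant domains, and that the distribution functions $F^+(z)=P(u^+(X)\le z)$ and $F^-(z)=P(u^-(X)\le z)$ are Lipschitz continuous on $(0,\infty)$ with constants $L^+$ and $L^-$ respectively. Let $\overline{\mathbb{C}}_n$ be the CPT estimator built from $n$ i.i.d. copies of $X$. Then $\overline{\mathbb{C}}_n\to\mathbb{C}(X)$ almost surely as $n\to\infty$.
   Context: Weight functions: $w^+,w^-:[0,1]\to[0,1]$ are continuous, nondecreasing, with $w^\pm(0)=0$ and $w^\pm(1)=1$. Utility functions: $u^+,u^-:\mathbb{R}\to[0,\infty)$ are continuous. For a real-valued random variable $X$, its CPT-value is $$\mathbb{C}(X)=\int_0^\infty w^+\big(P(u^+(X)>z)\big)\,dz-\int_0^\infty w^-\big(P(u^-(X)>z)\big)\,dz .$$ CPT estimator: given i.i.d. copies $X_1,\dots,X_n$ of $X$, let $U_{(1)}\le\cdots\le U_{(n)}$ be the order statistics of $u^+(X_1),\dots,u^+(X_n)$ and $V_{(1)}\le\cdots\le V_{(n)}$ those of $u^-(X_1),\dots,u^-(X_n)$, and set $$\overline{\mathbb{C}}_n=\sum_{i=1}^n U_{(i)}\Big(w^+\big(\tfrac{n-i+1}{n}\big)-w^+\big(\tfrac{n-i}{n}\big)\Big)-\sum_{i=1}^n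 V_{(i)}\Big(w^-\big(\tfrac{n-i+1}{n}\big)-w^-\big(\tfrac{n-i}{n}\big)\Big),$$ equivalently $\overline{\mathbb{C}}_n=\int_0^\infty w^+(1-\hat F^+_n(x))\,dx-\int_0^\infty w^-(1-\hat F^-_n(x))\,dx$ with $\hat F^\pm_n(x)=\frac1n\sum_{i=1}^n\mathbf 1\{u^\pm(X_i)\le x\}$. A function $f:[0,1]\to\mathbb{R}$ is Hölder continuous of order $\alpha\in(0,1]$ with constant $H>0$ if $|f(x)-f(y)|\le H|x-y|^{\alpha}$ for all $x,y\in[0,1]$. *)

theory Defs
  imports "HOL-Probability.Probability"
begin

definition weight_fn :: "(real \<Rightarrow> real) \<Rightarrow> bool" where
  "weight_fn w \<longleftrightarrow> continuous_on {0..1} w \<and> mono_on {0..1} w \<and>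
     w ` {0..1} \<subseteq> {0..1} \<and> w 0 = 0 \<and> w 1 = 1"

definition holder_on01 :: "real \<Rightarrow> real \<Rightarrow> (real \<Rightarrow> real) \<Rightarrow> bool" where
  "holder_on01 \<alpha> H f \<longleftrightarrow> (\<forall>x\<in>{0..1}. \<forall>y\<in>{0..1}. \<bar>f x - f y\<bar> \<le> H * \<bar>x - y\<bar> powr \<alpha>)"

definition cpt_value ::
  "'a measure \<Rightarrow> (real \<Rightarrow> real) \<Rightarrow> (real \<Rightarrow> real) \<Rightarrow> (real \<Rightarrow> real) \<Rightarrow> (real \<Rightarrow> real)
    \<Rightarrow> ('a \<Rightarrow> real) \<Rightarrow> real" where
  "cpt_value M wp wm up um X =
     (LBINT z:{0..}. wp (measure M {\<omega> \<in> space M. up (X \<omega>) > z}))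
   - (LBINT z:{0..}. wm (measure M {\<omega> \<in> space M. um (X \<omega>) > z}))"

text \<open>CPT estimator from a sample xs = [X_1,...,X_n] (order statistics,
  0-based: entry j of the sorted list is the (j+1)-th order statistic).\<close>
definition cpt_est ::
  "(real \<Rightarrow> real) \<Rightarrow> (real \<Rightarrow> real) \<Rightarrow> (real \<Rightarrow> real) \<Rightarrow> (real \<Rightarrow> real) \<Rightarrow> real list \<Rightarrow> real" where
  "cpt_est wp wm up um xs =
    (let n = length xs; U = sort (map up xs); V = sort (map um xs) in
      (\<Sum>j<n. U ! j * (wp (real (n - j) / real n) - wp ((real (n - j) - 1) / real n)))
    - (\<Sum>j<n. V ! j * (wm (real (n - j) / real n) - wm ((real (n - j) - 1) / real n))))"

end

theory Submission
  imports Defs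
begin

text \<open>
  Each half of the CPT estimator is the CPT value of the empirical distribution: summing by parts,
  it equals \<open>\<integral>\<^sub>0\<^sup>\<infinity> w (G\<^sub>n z) dz\<close>, where \<open>G\<^sub>n\<close> is the empirical survival function of the
  sample \<open>u(X\<^sub>i)\<close>. The strong law gives \<open>G\<^sub>n q \<longrightarrow> G q\<close> almost surely for all rational \<open>q\<close>
  simultaneously, and monotonicity together with the continuity of the true survival function \<open>G\<close>
  (here from the Lipschitz hypothesis) extends this to every \<open>z > 0\<close>.

  Pointwise convergence of the integrands is not enough on the unbounded domain. H\<ouml>lder continuity
  gives \<open>\<bar>w p\<bar> \<le> H (c\<^sup>\<alpha> + p c\<^sup>\<alpha>\<^sup>-\<^sup>1)\<close> for every \<open>c > 0\<close>; with \<open>c z = max (G z) (exp (-z/\<alpha>))\<close>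
  the first term is integrable by the \<open>\<gamma>\<close>-moment hypothesis, and the integral of the second,
  evaluated at \<open>p = G\<^sub>n z\<close>, is the sample mean of \<open>\<phi>(u(X\<^sub>i))\<close> with \<open>\<phi> y = \<integral>\<^sub>0\<^sup>y c\<^sup>\<alpha>\<^sup>-\<^sup>1\<close>. A one-sided
  strong law for nonnegative integrable variables (dyadic blocks, truncation, Chebyshev and
  Borel-Cantelli) bounds its limsup by \<open>E \<phi>(u(X)) = \<integral>\<^sub>0\<^sup>\<infinity> G c\<^sup>\<alpha>\<^sup>-\<^sup>1\<close>, the integral of the
  limiting dominating function, and Pratt's lemma concludes.
\<close>

lemma sum_powers_of_two_below_le:
  fixes v :: real
  assumes "v \<ge> 0"
  shows "(\<Sum>j<J. if 2^j < v then 2^j else 0) \<le> 2 * v"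
proof -
  have "(\<Sum>j<J. if 2^j < v then 2^j else 0) \<le> 2 * v \<and>
        (\<Sum>j<J. if 2^j < v then 2^j else 0) \<le> (2::real)^J - 1"
  proof (induction J)
    case (Suc J)
    let ?s = "\<Sum>j<J. if 2^j < v then 2^j else (0::real)"
    show ?case
    proof (cases "2^J < v")
      case True
      then have "(\<Sum>j<Suc J. if 2^j < v then 2^j else (0::real)) = ?s + 2^J" by simp
      moreover have "?s + 2^J \<le> 2 * v" "?s + 2^J \<le> 2^Suc J - 1" using Suc.IH True by auto
      ultimately show ?thesis by simp
    next
      case False
      then have "(\<Sum>j<Suc J. if 2^j < v then 2^j else (0::real)) = ?s" by simp
      moreover have "?s \<le> 2^Suc J - 1"
        using Suc.IH[THEN conjunct2] zero_le_power[of "2::real" J] by (simp only: power_Suc) linarith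
      ultimately show ?thesis using Suc.IH by simp
    qed
  qed (use assms in simp)
  then show ?thesis ..
qed

lemma sum_square_over_powers_of_two_above_le:
  fixes v :: real
  assumes v: "v \<ge> 0"
  shows "(\<Sum>j<J. (if v \<le> 2^j then v\<^sup>2 else 0) / 2^j) \<le> 2 * v"
proof -
  define S where "S J = (\<Sum>j<J. (if v \<le> 2^j then v\<^sup>2 else 0) / (2::real)^j)" for J
  \<comment> \<open>once \<open>v \<le> 2^J\<close>, all remaining terms together contribute at most \<open>2 v\<^sup>2 / 2^J\<close>\<close>
  have "S J + (if v \<le> 2^J then 2 * v\<^sup>2 / 2^J else 0) \<le> 2 * v \<and> (2^J < v \<longrightarrow> S J = 0)" for J
  proof (induction J)
    case 0
    have "v \<le> 1 \<Longrightarrow> 2 * v\<^sup>2 \<le> 2 * v"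
      using v by (simp add: power2_eq_square mult_left_le_one_le)
    then show ?case using v by (auto simp: S_def)
  next
    case (Suc J)
    have pos: "(0::real) < 2^J" by simp
    show ?case
    proof (cases "v \<le> 2^J")
      case True
      then have vS: "v \<le> 2^Suc J" using pos by (simp only: power_Suc)
      have "S (Suc J) = S J + v\<^sup>2 / 2^J" using True by (simp add: S_def)
      moreover have "2 * v\<^sup>2 / 2 ^ Suc J = v\<^sup>2 / 2^J" "2 * v\<^sup>2 / 2 ^ J = v\<^sup>2 / 2^J + v\<^sup>2 / 2^J" by simp_all
      moreover have "S J + 2 * v\<^sup>2 / 2^J \<le> 2 * v" using Suc.IH True by simp
      ultimately show ?thesis using vS by (simp only: if_P) linarith
    next
      case False
      then have "S (Suc J) = 0" using Suc.IH by (simp add: S_def)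
      moreover have "2 * v\<^sup>2 / 2 ^ Suc J \<le> 2 * v" if "v \<le> 2 ^ Suc J"
      proof -
        have "2 * v\<^sup>2 / 2 ^ Suc J = v * (v / 2^J)" by (simp add: power2_eq_square)
        also have "\<dots> \<le> v * 2" using that v by (intro mult_left_mono) (auto simp: field_simps)
        finally show ?thesis by simp
      qed
      moreover have "2 ^ Suc J < v \<Longrightarrow> 2^J < v" using pos by (simp only: power_Suc)
      ultimately show ?thesis using v by auto
    qed
  qed
  then have "S J + (if v \<le> 2^J then 2 * v\<^sup>2 / 2^J else 0) \<le> 2 * v" by blast
  moreover have "0 \<le> (if v \<le> 2^J then 2 * v\<^sup>2 / 2^J else 0)" by simp
  ultimately show ?thesis unfolding S_def by linarith
qed

lemma ex_power_of_two_between: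
  fixes n :: nat
  assumes "n \<ge> 1"
  shows "\<exists>k. n < 2^k \<and> 2^k \<le> 2 * n"
  using assms
proof (induction n rule: nat_induct_at_least)
  case base
  then show ?case by (intro exI[of _ 1]) auto
next
  case (Suc n)
  then obtain k where k: "n < 2^k" "2^k \<le> 2 * n" by auto
  show ?case
  proof (cases "Suc n < 2^k")
    case True
    then show ?thesis using k by (intro exI[of _ k]) auto
  next
    case False
    then have "Suc n = 2^k" using k by auto
    then show ?thesis by (intro exI[of _ "Suc k"]) auto
  qed
qed

lemma eventually_mean_le_of_dyadic:
  fixes S :: "nat \<Rightarrow> real"
  assumes mono: "\<And>n n'. n \<le> n' \<Longrightarrow> S n \<le> S n'" and m: "m \<ge> 0"
    and dyadic: "eventually (\<lambda>j. S (2^j) \<le> 2^j * m) sequentially"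
  shows "eventually (\<lambda>n. S n / real n \<le> 2 * m) sequentially"
proof -
  obtain J where J: "\<And>j. j \<ge> J \<Longrightarrow> S (2^j) \<le> 2^j * m"
    using dyadic unfolding eventually_sequentially by auto
  show ?thesis
    unfolding eventually_sequentially
  proof (intro exI[of _ "max 1 (2^J)"] allI impI)
    fix n :: nat assume "max 1 (2^J) \<le> n"
    then have n1: "n \<ge> 1" and nJ: "2^J \<le> n" by (simp_all only: max.bounded_iff)
    obtain k where k: "n < 2^k" "2^k \<le> 2 * n" using ex_power_of_two_between[OF n1] by auto
    have "(2::nat)^J < 2^k" using nJ k by linarith
    then have "J \<le> k" using power_less_imp_less_exp[of 2 J k] by auto
    have "S n \<le> S (2^k)" using k by (intro mono) simp
    also have "\<dots> \<le> 2^k * m" using J[OF \<open>J \<le> k\<close>] .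
    also have "\<dots> \<le> real (2 * n) * m"
    proof (rule mult_right_mono)
      have "real (2^k) \<le> real (2 * n)" using k(2) by (simp only: of_nat_le_iff)
      then show "(2::real)^k \<le> real (2 * n)" by simp
    qed (rule m)
    finally show "S n / real n \<le> 2 * m" using n1 by (simp add: divide_le_eq mult_ac)
  qed
qed

definition truncate_at :: "real \<Rightarrow> real \<Rightarrow> real" where
  "truncate_at t v = (if v \<le> t then v else 0)"

lemma powr_le_powr_plus_mult_powr:
  fixes p c a :: real
  assumes "0 \<le> p" "0 < c" "0 < a" "a \<le> 1"
  shows "p powr a \<le> c powr a + p * c powr (a - 1)"
proof (cases "p \<le> c")
  case True
  then have "p powr a \<le> c powr a" using assms by (intro powr_mono2) auto
  moreover have "0 \<le> p * c powr (a - 1)" using assms by simp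
  ultimately show ?thesis by linarith
next
  case False
  then have "p powr a = p * p powr (a - 1)" using assms by (simp add: powr_mult_base)
  also have "\<dots> \<le> p * c powr (a - 1)"
    using False assms by (intro mult_left_mono powr_mono2') auto
  finally show ?thesis by (simp add: add_increasing)
qed

lemma holder_abs_le_powr_split:
  assumes "holder_on01 \<alpha> H w" "w 0 = 0" "0 < \<alpha>" "\<alpha> \<le> 1" "H \<ge> 0" "0 \<le> p" "p \<le> 1" "c > 0"
  shows "\<bar>w p\<bar> \<le> H * (c powr \<alpha> + p * c powr (\<alpha> - 1))"
proof -
  have "\<bar>w p\<bar> \<le> H * p powr \<alpha>"
    using assms(1,2,6,7) unfolding holder_on01_def by (auto dest: bspec[of _ _ p] bspec[of _ _ 0])
  also have "\<dots> \<le> H * (c powr \<alpha> + p * c powr (\<alpha> - 1))"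
    using assms by (intro mult_left_mono powr_le_powr_plus_mult_powr) auto
  finally show ?thesis .
qed

lemma tendsto_of_antimono_of_tendsto_rats:
  fixes F :: "nat \<Rightarrow> real \<Rightarrow> real" and G :: "real \<Rightarrow> real"
  assumes antimono: "\<And>n z r. z \<le> r \<Longrightarrow> F n r \<le> F n z"
    and rats: "\<And>q. q \<in> \<rat> \<Longrightarrow> (\<lambda>n. F n q) \<longlonglongrightarrow> G q"
    and cont: "isCont G z"
  shows "(\<lambda>n. F n z) \<longlonglongrightarrow> G z"
proof (rule tendstoI)
  fix e :: real assume e: "e > 0"
  then obtain d where d: "d > 0" and Gd: "\<And>y. dist y z < d \<Longrightarrow> dist (G y) (G z) < e / 2"
    using cont unfolding continuous_at_eps_delta by (metis half_gt_zero)
  obtain q where q: "q \<in> \<rat>" "z - d < q" "q < z" using Rats_dense_in_real[of "z - d" z] d by auto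
  obtain r where r: "r \<in> \<rat>" "z < r" "r < z + d" using Rats_dense_in_real[of z "z + d"] d by auto
  have Gq: "\<bar>G q - G z\<bar> < e / 2" and Gr: "\<bar>G r - G z\<bar> < e / 2"
    using Gd[of q] Gd[of r] q r by (auto simp: dist_real_def)
  have "eventually (\<lambda>n. dist (F n q) (G q) < e / 2) sequentially"
    by (rule tendstoD[OF rats[OF q(1)]]) (use e in simp)
  moreover have "eventually (\<lambda>n. dist (F n r) (G r) < e / 2) sequentially"
    by (rule tendstoD[OF rats[OF r(1)]]) (use e in simp)
  ultimately show "eventually (\<lambda>n. dist (F n z) (G z) < e) sequentially"
  proof eventually_elim
    case (elim n)
    have "F n r \<le> F n z" using r(2) by (intro antimono) simp
    moreover have "F n z \<le> F n q" using q(3) by (intro antimono) simp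
    ultimately show ?case using elim Gq Gr unfolding dist_real_def abs_less_iff by linarith
  qed
qed

lemma AE_all_pos_mono:
  fixes Q :: "real \<Rightarrow> 'a \<Rightarrow> bool"
  assumes "\<And>e. e > 0 \<Longrightarrow> AE x in M. Q e x"
    and "\<And>e e' x. Q e x \<Longrightarrow> e \<le> e' \<Longrightarrow> Q e' x"
  shows "AE x in M. \<forall>e>0. Q e x"
proof -
  have "AE x in M. \<forall>m::nat. Q (1 / real (Suc m)) x"
    by (subst AE_all_countable) (auto intro: assms(1))
  then show ?thesis
  proof (rule AE_mp, intro AE_I2 impI allI)
    fix x and e :: real
    assume Q: "\<forall>m::nat. Q (1 / real (Suc m)) x" and "e > 0"
    then obtain m :: nat where "1 / real (Suc m) < e" using nat_approx_posE by blast
    then show "Q e x" using Q assms(2) by (meson less_eq_real_def)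
  qed
qed

lemma AE_tendsto_of_AE_eventually_dist_less:
  fixes f :: "nat \<Rightarrow> 'a \<Rightarrow> 'b::metric_space"
  assumes "\<And>e. e > 0 \<Longrightarrow> AE x in M. eventually (\<lambda>n. dist (f n x) (l x) < e) sequentially"
  shows "AE x in M. (\<lambda>n. f n x) \<longlonglongrightarrow> l x"
proof -
  have "AE x in M. \<forall>e>0. eventually (\<lambda>n. dist (f n x) (l x) < e) sequentially"
    using assms by (rule AE_all_pos_mono) (auto elim: eventually_mono)
  then show ?thesis by eventually_elim (blast intro: tendstoI)
qed

section \<open>The estimator as an integral of the empirical survival function\<close>

definition count_above :: "real list \<Rightarrow> real \<Rightarrow> nat" where
  "count_above ys z = length (filter (\<lambda>v. z < v) ys)"

lemma count_above_map_upt: "real (count_above (map f [0..<n]) z) = (\<Sum>i<n. if z < f i then 1 else 0)"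
  by (induction n) (auto simp: count_above_def)

lemma count_above_antimono: "z \<le> r \<Longrightarrow> count_above ys r \<le> count_above ys z"
  unfolding count_above_def by (induction ys) auto

lemma count_above_sort [simp]: "count_above (sort ys) z = count_above ys z"
  unfolding count_above_def by (simp add: filter_sort)

lemma count_above_le_length: "count_above ys z \<le> length ys"
  unfolding count_above_def by (rule length_filter_le)

text \<open>Either half of \<open>cpt_est\<close>, for a sample \<open>ys\<close> sorted increasingly and \<open>n = length ys\<close>.\<close>

definition rank_weighted_sum :: "(real \<Rightarrow> real) \<Rightarrow> nat \<Rightarrow> real list \<Rightarrow> real" where
  "rank_weighted_sum w n ys =
    (\<Sum>j<length ys. ys ! j * (w (real (length ys - j) / real n) - w ((real (length ys - j) - 1) / real n)))"

lemma integral_indicator_atLeastLessThan_mult: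
  fixes y c :: real
  assumes "y \<ge> 0"
  shows "integrable lborel (\<lambda>z. indicator {0..<y} z * c)"
    and "integral\<^sup>L lborel (\<lambda>z. indicator {0..<y} z * c) = y * c"
proof -
  have "integrable lborel (indicator {0..<y} :: real \<Rightarrow> real)"
    by (rule integrable_real_indicator) (use assms in auto)
  then show "integrable lborel (\<lambda>z. indicator {0..<y} z * c)" by auto
  show "integral\<^sup>L lborel (\<lambda>z. indicator {0..<y} z * c) = y * c"
    using assms by (simp add: integral_indicator)
qed

lemma rank_weighted_sum_eq_integral:
  fixes w :: "real \<Rightarrow> real"
  assumes "sorted ys" "\<forall>v\<in>set ys. v \<ge> 0" "w 0 = 0"
  shows "integrable lborel (\<lambda>z. indicator {0..} z * w (real (count_above ys z) / real n)) \<and>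
    rank_weighted_sum w n ys = integral\<^sup>L lborel (\<lambda>z. indicator {0..} z * w (real (count_above ys z) / real n))"
  using assms(1,2)
proof (induction ys)
  case Nil
  then show ?case using assms(3) by (simp add: count_above_def rank_weighted_sum_def)
next
  case (Cons y zs)
  define L where "L = length zs"
  define c where "c = w (real (Suc L) / real n) - w (real L / real n)"
  have y: "y \<ge> 0" "\<forall>v\<in>set zs. y \<le> v" using Cons.prems by auto
  have IH: "integrable lborel (\<lambda>z. indicator {0..} z * w (real (count_above zs z) / real n))"
    "rank_weighted_sum w n zs = integral\<^sup>L lborel (\<lambda>z. indicator {0..} z * w (real (count_above zs z) / real n))"
    using Cons by auto
  \<comment> \<open>below the smallest sample point \<open>y\<close> every point of \<open>zs\<close> is counted\<close>
  have pt: "indicator {0..} z * w (real (count_above (y # zs) z) / real n) =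
      indicator {0..} z * w (real (count_above zs z) / real n) + indicator {0..<y} z * c" for z
  proof (cases "z < y")
    case True
    then have "filter (\<lambda>v. z < v) zs = zs" using y by (intro filter_True) auto
    then show ?thesis using True by (auto simp: count_above_def c_def L_def indicator_def)
  qed (auto simp: count_above_def indicator_def)
  have "rank_weighted_sum w n (y # zs) =
      (\<Sum>j<Suc L. (y # zs) ! j * (w (real (Suc L - j) / real n) - w ((real (Suc L - j) - 1) / real n)))"
    by (simp add: rank_weighted_sum_def L_def)
  also have "\<dots> = y * (w (real (Suc L - 0) / real n) - w ((real (Suc L - 0) - 1) / real n)) +
      (\<Sum>j<L. zs ! j * (w (real (L - j) / real n) - w ((real (L - j) - 1) / real n)))"
    by (simp only: sum.lessThan_Suc_shift nth_Cons_0 nth_Cons_Suc diff_Suc_Suc)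
  also have "\<dots> = y * c + rank_weighted_sum w n zs"
    by (simp add: c_def rank_weighted_sum_def L_def)
  finally have sum_eq: "rank_weighted_sum w n (y # zs) = y * c + rank_weighted_sum w n zs" .
  note intc = integral_indicator_atLeastLessThan_mult[OF y(1), of c]
  have "integral\<^sup>L lborel (\<lambda>z. indicator {0..} z * w (real (count_above (y # zs) z) / real n)) =
      integral\<^sup>L lborel (\<lambda>z. indicator {0..} z * w (real (count_above zs z) / real n)) + y * c"
    unfolding pt using IH(1) intc by simp
  moreover have "integrable lborel (\<lambda>z. indicator {0..} z * w (real (count_above (y # zs) z) / real n))"
    unfolding pt using IH(1) intc(1) by simp
  ultimately show ?case using IH(2) sum_eq by simp
qed

lemma integral_empirical_survival_mult:
  fixes k :: "real \<Rightarrow> real"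
  assumes "\<And>y. integrable lborel (\<lambda>z. indicator {0..} z * (if z < y then k z else 0))"
  shows "integrable lborel (\<lambda>z. indicator {0..} z * (real (count_above (map f [0..<n]) z) / real n * k z))"
    and "(LINT z|lborel. indicator {0..} z * (real (count_above (map f [0..<n]) z) / real n * k z))
      = (\<Sum>i<n. LINT z|lborel. indicator {0..} z * (if z < f i then k z else 0)) / real n"
proof -
  have eq: "indicator {0..} z * (real (count_above (map f [0..<n]) z) / real n * k z) =
      (\<Sum>i<n. indicator {0..} z * (if z < f i then k z else 0)) / real n" for z
    unfolding count_above_map_upt
    by (simp add: sum_distrib_left sum_divide_distrib[symmetric] if_distrib mult_ac cong: if_cong)
  show "integrable lborel (\<lambda>z. indicator {0..} z * (real (count_above (map f [0..<n]) z) / real n * k z))"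
    unfolding eq by (intro integrable_divide Bochner_Integration.integrable_sum assms)
  show "(LINT z|lborel. indicator {0..} z * (real (count_above (map f [0..<n]) z) / real n * k z))
      = (\<Sum>i<n. LINT z|lborel. indicator {0..} z * (if z < f i then k z else 0)) / real n"
    unfolding eq by (subst integral_divide_zero, subst Bochner_Integration.integral_sum) (auto intro: assms)
qed

section \<open>Dominated convergence with a varying dominating function\<close>

lemma integral_abs_diff_tendsto_zero:
  fixes g :: "nat \<Rightarrow> 'b \<Rightarrow> real" and gl :: "'b \<Rightarrow> real"
  assumes gi: "\<And>n. integrable N (g n)" and gli: "integrable N gl"
    and cg: "AE z in N. (\<lambda>n. g n z) \<longlonglongrightarrow> gl z"
    and gnn: "AE z in N. \<forall>n. g n z \<ge> 0"
    and ls: "\<And>e. e > 0 \<Longrightarrow> eventually (\<lambda>n. integral\<^sup>L N (g n) \<le> integral\<^sup>L N gl + e) sequentially"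
  shows "(\<lambda>n. integral\<^sup>L N (\<lambda>z. \<bar>g n z - gl z\<bar>)) \<longlonglongrightarrow> 0"
proof -
  have glnn: "AE z in N. gl z \<ge> 0"
    using cg gnn by eventually_elim (auto intro: LIMSEQ_le_const)
  have mi: "integrable N (\<lambda>z. min (g n z) (gl z))" for n
    using gi gli by (rule integrable_min)
  have min_lim: "(\<lambda>n. integral\<^sup>L N (\<lambda>z. min (g n z) (gl z))) \<longlonglongrightarrow> integral\<^sup>L N gl"
  proof (rule integral_dominated_convergence[where w=gl])
    show "AE z in N. (\<lambda>n. min (g n z) (gl z)) \<longlonglongrightarrow> gl z"
      using cg by eventually_elim (auto intro: tendsto_eq_intros)
    show "AE z in N. norm (min (g n z) (gl z)) \<le> gl z" for n
      using gnn glnn by eventually_elim auto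
  qed (use gi gli in auto)
  have abs_eq: "integral\<^sup>L N (\<lambda>z. \<bar>g n z - gl z\<bar>) =
      integral\<^sup>L N (g n) + integral\<^sup>L N gl - 2 * integral\<^sup>L N (\<lambda>z. min (g n z) (gl z))" for n
  proof -
    have "integral\<^sup>L N (\<lambda>z. \<bar>g n z - gl z\<bar>) = integral\<^sup>L N (\<lambda>z. g n z + gl z - 2 * min (g n z) (gl z))"
      by (intro Bochner_Integration.integral_cong refl) (auto simp: min_def)
    also have "\<dots> = integral\<^sup>L N (g n) + integral\<^sup>L N gl - 2 * integral\<^sup>L N (\<lambda>z. min (g n z) (gl z))"
      using gi gli mi by simp
    finally show ?thesis .
  qed
  show ?thesis
    unfolding order_tendsto_iff
  proof (intro conjI allI impI)
    fix l :: real assume "l < 0"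
    then show "eventually (\<lambda>n. l < integral\<^sup>L N (\<lambda>z. \<bar>g n z - gl z\<bar>)) sequentially"
      by (intro always_eventually allI) (auto intro: less_le_trans[OF _ integral_nonneg_AE])
  next
    fix u :: real assume u: "u > 0"
    have "eventually (\<lambda>n. integral\<^sup>L N (g n) \<le> integral\<^sup>L N gl + u / 3) sequentially"
      using u by (intro ls) auto
    moreover have "eventually (\<lambda>n. integral\<^sup>L N gl - u / 3 < integral\<^sup>L N (\<lambda>z. min (g n z) (gl z))) sequentially"
      using order_tendstoD(1)[OF min_lim, of "integral\<^sup>L N gl - u / 3"] u by simp
    ultimately show "eventually (\<lambda>n. integral\<^sup>L N (\<lambda>z. \<bar>g n z - gl z\<bar>) < u) sequentially"
      by eventually_elim (use u in \<open>auto simp: abs_eq\<close>)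
  qed
qed

lemma integral_min_abs_diff_tendsto_zero:
  fixes f :: "nat \<Rightarrow> 'b \<Rightarrow> real" and fl gl :: "'b \<Rightarrow> real"
  assumes fi: "\<And>n. integrable N (f n)" and fli: "integrable N fl" and gli: "integrable N gl"
    and cf: "AE z in N. (\<lambda>n. f n z) \<longlonglongrightarrow> fl z"
    and flgl: "AE z in N. \<bar>fl z\<bar> \<le> gl z"
  shows "(\<lambda>n. integral\<^sup>L N (\<lambda>z. min \<bar>f n z - fl z\<bar> (2 * gl z))) \<longlonglongrightarrow> 0"
proof -
  have "(\<lambda>n. integral\<^sup>L N (\<lambda>z. min \<bar>f n z - fl z\<bar> (2 * gl z))) \<longlonglongrightarrow> integral\<^sup>L N (\<lambda>z. 0)"
  proof (rule integral_dominated_convergence[where w="\<lambda>z. 2 * gl z"])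
    show "AE z in N. (\<lambda>n. min \<bar>f n z - fl z\<bar> (2 * gl z)) \<longlonglongrightarrow> 0"
      using cf flgl
    proof eventually_elim
      case (elim z)
      have "(\<lambda>n. min \<bar>f n z - fl z\<bar> (2 * gl z)) \<longlonglongrightarrow> min \<bar>fl z - fl z\<bar> (2 * gl z)"
        by (intro tendsto_intros elim(1))
      then show ?case using elim(2) by simp
    qed
    show "AE z in N. norm (min \<bar>f n z - fl z\<bar> (2 * gl z)) \<le> 2 * gl z" for n
      using flgl by eventually_elim auto
  qed (use fi fli gli in auto)
  then show ?thesis by simp
qed

lemma integral_dominated_convergence_Pratt:
  fixes f g :: "nat \<Rightarrow> 'b \<Rightarrow> real" and fl gl :: "'b \<Rightarrow> real"
  assumes fi: "\<And>n. integrable N (f n)" and fli: "integrable N fl"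
    and gi: "\<And>n. integrable N (g n)" and gli: "integrable N gl"
    and cf: "AE z in N. (\<lambda>n. f n z) \<longlonglongrightarrow> fl z"
    and cg: "AE z in N. (\<lambda>n. g n z) \<longlonglongrightarrow> gl z"
    and dom: "\<And>n. AE z in N. \<bar>f n z\<bar> \<le> g n z"
    and ls: "\<And>e. e > 0 \<Longrightarrow> eventually (\<lambda>n. integral\<^sup>L N (g n) \<le> integral\<^sup>L N gl + e) sequentially"
  shows "(\<lambda>n. integral\<^sup>L N (f n)) \<longlonglongrightarrow> integral\<^sup>L N fl"
proof -
  have domall: "AE z in N. \<forall>n. \<bar>f n z\<bar> \<le> g n z"
    using dom by (subst AE_all_countable) auto
  have flgl: "AE z in N. \<bar>fl z\<bar> \<le> gl z"
    using cf cg domall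
  proof eventually_elim
    case (elim z)
    then show ?case by (intro LIMSEQ_le[OF tendsto_rabs[OF elim(1)] elim(2)]) auto
  qed
  have gabs: "(\<lambda>n. integral\<^sup>L N (\<lambda>z. \<bar>g n z - gl z\<bar>)) \<longlonglongrightarrow> 0"
    using domall by (intro integral_abs_diff_tendsto_zero gi gli cg ls)
      (auto elim!: eventually_mono intro: order_trans[OF abs_ge_zero])
  have hi: "integrable N (\<lambda>z. min \<bar>f n z - fl z\<bar> (2 * gl z))" for n
    using fi fli gli by (intro integrable_min) auto
  note h_lim = integral_min_abs_diff_tendsto_zero[OF fi fli gli cf flgl]
  \<comment> \<open>\<open>\<bar>f n - fl\<bar> \<le> g n + gl \<le> 2 gl + \<bar>g n - gl\<bar>\<close>\<close>
  have bound: "\<bar>integral\<^sup>L N (f n) - integral\<^sup>L N fl\<bar> \<le>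
      integral\<^sup>L N (\<lambda>z. min \<bar>f n z - fl z\<bar> (2 * gl z)) + integral\<^sup>L N (\<lambda>z. \<bar>g n z - gl z\<bar>)" for n
  proof -
    have "\<bar>integral\<^sup>L N (f n) - integral\<^sup>L N fl\<bar> \<le> integral\<^sup>L N (\<lambda>z. \<bar>f n z - fl z\<bar>)"
      using integral_norm_bound[of N "\<lambda>z. f n z - fl z"] fi fli by simp
    also have "\<dots> \<le> integral\<^sup>L N (\<lambda>z. min \<bar>f n z - fl z\<bar> (2 * gl z) + \<bar>g n z - gl z\<bar>)"
    proof (rule integral_mono_AE)
      show "integrable N (\<lambda>z. \<bar>f n z - fl z\<bar>)" using fi fli by auto
      show "integrable N (\<lambda>z. min \<bar>f n z - fl z\<bar> (2 * gl z) + \<bar>g n z - gl z\<bar>)" using hi gi gli by auto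
      show "AE z in N. \<bar>f n z - fl z\<bar> \<le> min \<bar>f n z - fl z\<bar> (2 * gl z) + \<bar>g n z - gl z\<bar>"
        using flgl domall
      proof eventually_elim
        case (elim z)
        then have "\<bar>f n z\<bar> \<le> g n z" by blast
        with elim(1) show ?case by (auto simp: min_def abs_if split: if_splits)
      qed
    qed
    also have "\<dots> = integral\<^sup>L N (\<lambda>z. min \<bar>f n z - fl z\<bar> (2 * gl z)) + integral\<^sup>L N (\<lambda>z. \<bar>g n z - gl z\<bar>)"
      using hi gi gli by simp
    finally show ?thesis .
  qed
  have "(\<lambda>n. integral\<^sup>L N (f n) - integral\<^sup>L N fl) \<longlonglongrightarrow> 0"
  proof (rule Lim_null_comparison)
    show "eventually (\<lambda>n. norm (integral\<^sup>L N (f n) - integral\<^sup>L N fl) \<le>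
      integral\<^sup>L N (\<lambda>z. min \<bar>f n z - fl z\<bar> (2 * gl z)) + integral\<^sup>L N (\<lambda>z. \<bar>g n z - gl z\<bar>)) sequentially"
      using bound by (intro always_eventually allI) simp
    show "(\<lambda>n. integral\<^sup>L N (\<lambda>z. min \<bar>f n z - fl z\<bar> (2 * gl z)) + integral\<^sup>L N (\<lambda>z. \<bar>g n z - gl z\<bar>)) \<longlonglongrightarrow> 0"
      using tendsto_add[OF h_lim gabs] by simp
  qed
  then show ?thesis by (simp add: LIM_zero_iff)
qed

lemma borel_measurable_continuous_on_comp_unit:
  fixes w :: "real \<Rightarrow> real"
  assumes "continuous_on {0..1} w" and [measurable]: "f \<in> borel_measurable N" and "\<And>x. f x \<in> {0..1}"
  shows "(\<lambda>x. w (f x)) \<in> borel_measurable N"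
proof -
  have "continuous_on UNIV (\<lambda>v. w (max 0 (min 1 v)))"
    by (rule continuous_on_compose2[OF assms(1)
        continuous_on_max[OF continuous_on_const continuous_on_min[OF continuous_on_const continuous_on_id]]]) auto
  then have [measurable]: "(\<lambda>v. w (max 0 (min 1 v))) \<in> borel_measurable borel"
    by (rule borel_measurable_continuous_onI)
  have "(\<lambda>x. w (max 0 (min 1 (f x)))) \<in> borel_measurable N" by measurable
  moreover have "w (max 0 (min 1 (f x))) = w (f x)" for x using assms(3)[of x] by simp
  ultimately show ?thesis by simp
qed

lemma integral_comp_tendsto_of_dominated:
  fixes w :: "real \<Rightarrow> real" and Gh :: "nat \<Rightarrow> real \<Rightarrow> real" and G a b :: "real \<Rightarrow> real"
  assumes w_cont: "continuous_on {0..1} w"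
    and Gh01: "\<And>n z. Gh n z \<in> {0..1}" and G01: "\<And>z. G z \<in> {0..1}"
    and conv: "\<And>z. z > 0 \<Longrightarrow> (\<lambda>n. Gh n z) \<longlonglongrightarrow> G z"
    and dom: "\<And>p z. p \<in> {0..1} \<Longrightarrow> \<bar>w p\<bar> \<le> a z + p * b z"
    and fi: "\<And>n. integrable lborel (\<lambda>z. indicator {0..} z * w (Gh n z))"
    and fl_meas: "(\<lambda>z. indicator {0..} z * w (G z)) \<in> borel_measurable lborel"
    and ai: "integrable lborel (\<lambda>z. indicator {0..} z * a z)"
    and bi: "integrable lborel (\<lambda>z. indicator {0..} z * (G z * b z))"
    and bni: "\<And>n. integrable lborel (\<lambda>z. indicator {0..} z * (Gh n z * b z))"
    and ls: "\<And>e. e > 0 \<Longrightarrow> eventually (\<lambda>n. (LINT z|lborel. indicator {0..} z * (Gh n z * b z))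
                 \<le> (LINT z|lborel. indicator {0..} z * (G z * b z)) + e) sequentially"
  shows "(\<lambda>n. LINT z|lborel. indicator {0..} z * w (Gh n z))
           \<longlonglongrightarrow> (LINT z|lborel. indicator {0..} z * w (G z))"
proof (rule integral_dominated_convergence_Pratt[where
      g="\<lambda>n z. indicator {0..} z * a z + indicator {0..} z * (Gh n z * b z)" and
      gl="\<lambda>z. indicator {0..} z * a z + indicator {0..} z * (G z * b z)", OF fi])
  show "integrable lborel (\<lambda>z. indicator {0..} z * a z + indicator {0..} z * (Gh n z * b z))" for n
    using ai bni by auto
  show gli: "integrable lborel (\<lambda>z. indicator {0..} z * a z + indicator {0..} z * (G z * b z))"
    using ai bi by auto
  show "integrable lborel (\<lambda>z. indicator {0..} z * w (G z))"
  proof (rule Bochner_Integration.integrable_bound[OF gli fl_meas], intro AE_I2)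
    show "norm (indicator {0..} z * w (G z)) \<le> norm (indicator {0..} z * a z + indicator {0..} z * (G z * b z))" for z
      using dom[of "G z" z, OF G01] by (auto simp: indicator_def)
  qed
  show "AE z in lborel. \<bar>indicator {0..} z * w (Gh n z)\<bar>
      \<le> indicator {0..} z * a z + indicator {0..} z * (Gh n z * b z)" for n
    using dom[of "Gh n _" _, OF Gh01] by (intro AE_I2) (auto simp: indicator_def)
  have "AE z in lborel. z < 0 \<or> z > (0::real)"
    using AE_lborel_singleton[of "0::real"] by (rule AE_mp) (rule AE_I2, auto)
  then show "AE z in lborel. (\<lambda>n. indicator {0..} z * w (Gh n z)) \<longlonglongrightarrow> indicator {0..} z * w (G z)"
  proof eventually_elim
    case (elim z)
    show ?case
    proof (cases "z > 0")
      case True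
      have "(\<lambda>n. w (Gh n z)) \<longlonglongrightarrow> w (G z)"
        by (rule continuous_on_tendsto_compose[OF w_cont conv[OF True]]) (use G01 Gh01 in auto)
      then show ?thesis by (intro tendsto_intros)
    qed (use elim in simp)
  qed
  from \<open>AE z in lborel. z < 0 \<or> z > 0\<close>
  show "AE z in lborel. (\<lambda>n. indicator {0..} z * a z + indicator {0..} z * (Gh n z * b z))
      \<longlonglongrightarrow> indicator {0..} z * a z + indicator {0..} z * (G z * b z)"
  proof eventually_elim
    case (elim z)
    show ?case
    proof (cases "z > 0")
      case True
      then show ?thesis by (intro tendsto_intros conv)
    qed (use elim in simp)
  qed
next
  fix e :: real assume "e > 0"
  from ls[OF this] show "eventually (\<lambda>n. (LINT z|lborel. indicator {0..} z * a z + indicator {0..} z * (Gh n z * b z))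
      \<le> (LINT z|lborel. indicator {0..} z * a z + indicator {0..} z * (G z * b z)) + e) sequentially"
    by eventually_elim (use ai bi bni in simp)
qed

text \<open>The exponential floor keeps the envelope positive, so that its power \<open>\<alpha> - 1 \<le> 0\<close> is locally
  bounded, while its power \<open>\<alpha>\<close> remains integrable.\<close>

definition envelope :: "real \<Rightarrow> (real \<Rightarrow> real) \<Rightarrow> real \<Rightarrow> real" where
  "envelope \<alpha> G z = max (G z) (exp (- z / \<alpha>))"

lemma envelope_pos: "envelope \<alpha> G z > 0"
  unfolding envelope_def by (simp add: max.strict_coboundedI2)

lemma borel_measurable_envelope [measurable]:
  "G \<in> borel_measurable borel \<Longrightarrow> envelope \<alpha> G \<in> borel_measurable borel"
  unfolding envelope_def[abs_def] by measurable

lemma integrable_exp_minus_nonneg: "integrable lborel (\<lambda>z::real. indicator {0..} z * exp (- z))"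
proof -
  have "(\<lambda>x. exp (-1 * x) :: real) integrable_on {0..}"
    by (rule integrable_on_exp_minus_to_infinity) simp
  then have "(\<lambda>x. exp (-1 * x) :: real) absolutely_integrable_on {0..}"
    by (rule nonnegative_absolutely_integrable_1) simp
  then have "integrable lebesgue (\<lambda>z. indicator {0..} z * exp (- z::real))"
    by (simp add: set_integrable_def)
  then show ?thesis by (subst (asm) integrable_completion) auto
qed

lemma integrable_envelope_powr_upto:
  fixes G :: "real \<Rightarrow> real"
  assumes \<alpha>: "0 < \<alpha>" "\<alpha> \<le> 1" and [measurable]: "G \<in> borel_measurable borel"
  shows "integrable lborel (\<lambda>z. indicator {0..} z * (if z < y then envelope \<alpha> G z powr (\<alpha> - 1) else 0))"
proof (rule Bochner_Integration.integrable_bound[OF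
      integral_indicator_atLeastLessThan_mult(1)[of "max y 0" "exp (max y 0 / \<alpha>)"]])
  show "AE z in lborel. norm (indicator {0..} z * (if z < y then envelope \<alpha> G z powr (\<alpha> - 1) else 0))
      \<le> norm (indicator {0..<max y 0} z * exp (max y 0 / \<alpha>))"
  proof (intro AE_I2)
    fix z :: real
    show "norm (indicator {0..} z * (if z < y then envelope \<alpha> G z powr (\<alpha> - 1) else 0))
        \<le> norm (indicator {0..<max y 0} z * exp (max y 0 / \<alpha>))"
    proof (cases "0 \<le> z \<and> z < y")
      case True
      have "envelope \<alpha> G z powr (\<alpha> - 1) \<le> exp (- z / \<alpha>) powr (\<alpha> - 1)"
        using \<alpha> by (intro powr_mono2') (auto simp: envelope_def)
      also have "\<dots> = exp (z / \<alpha> - z)"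
        using \<alpha> by (simp add: powr_def field_simps)
      also have "\<dots> \<le> exp (max y 0 / \<alpha>)"
      proof -
        have "z / \<alpha> \<le> max y 0 / \<alpha>" using True \<alpha> by (intro divide_right_mono) auto
        then show ?thesis using True by simp
      qed
      finally show ?thesis using True by (auto simp: indicator_def)
    qed (auto simp: indicator_def)
  qed
qed simp_all

context
  fixes \<alpha> \<gamma> :: real and G :: "real \<Rightarrow> real"
  assumes \<alpha>: "0 < \<alpha>" "\<alpha> \<le> 1" and \<gamma>: "0 < \<gamma>" "\<gamma> \<le> \<alpha>"
    and G01: "\<And>z. 0 \<le> G z" "\<And>z. G z \<le> 1"
    and G_meas [measurable]: "G \<in> borel_measurable borel"
    and tail: "(\<integral>\<^sup>+ z. indicator {0..} z * ennreal (G z powr \<gamma>) \<partial>lborel) < \<infinity>"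
begin

lemma integrable_envelope_powr:
  "integrable lborel (\<lambda>z. indicator {0..} z * envelope \<alpha> G z powr \<alpha>)"
proof -
  have "integrable lborel (\<lambda>z. indicator {0..} z * G z powr \<gamma>)"
  proof (rule integrableI_nonneg)
    have "(\<integral>\<^sup>+ z. ennreal (indicator {0..} z * G z powr \<gamma>) \<partial>lborel)
        = (\<integral>\<^sup>+ z. indicator {0..} z * ennreal (G z powr \<gamma>) \<partial>lborel)"
      by (intro nn_integral_cong) (auto simp: indicator_def)
    then show "(\<integral>\<^sup>+ z. ennreal (indicator {0..} z * G z powr \<gamma>) \<partial>lborel) < \<infinity>"
      using tail by simp
  qed auto
  note int = Bochner_Integration.integrable_add[OF this integrable_exp_minus_nonneg]
  have "envelope \<alpha> G z powr \<alpha> \<le> G z powr \<gamma> + exp (- z)" for z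
  proof -
    have "envelope \<alpha> G z powr \<alpha> \<le> G z powr \<alpha> + exp (- z / \<alpha>) powr \<alpha>"
      unfolding envelope_def using G01[of z] by (simp add: max_def)
    also have "\<dots> \<le> G z powr \<gamma> + exp (- z)"
      using \<alpha> \<gamma> G01[of z] powr_mono'[of \<gamma> \<alpha> "G z"] by (simp add: powr_def)
    finally show ?thesis .
  qed
  then show ?thesis
    by (intro Bochner_Integration.integrable_bound[OF int] AE_I2) (auto simp: indicator_def)
qed

lemma integrable_mult_envelope_powr:
  "integrable lborel (\<lambda>z. indicator {0..} z * (G z * envelope \<alpha> G z powr (\<alpha> - 1)))"
proof (rule Bochner_Integration.integrable_bound[OF integrable_envelope_powr])
  show "AE z in lborel. norm (indicator {0..} z * (G z * envelope \<alpha> G z powr (\<alpha> - 1)))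
      \<le> norm (indicator {0..} z * envelope \<alpha> G z powr \<alpha>)"
  proof (intro AE_I2)
    fix z :: real
    have "G z * envelope \<alpha> G z powr (\<alpha> - 1) \<le> envelope \<alpha> G z * envelope \<alpha> G z powr (\<alpha> - 1)"
      using G01[of z] by (intro mult_right_mono) (auto simp: envelope_def)
    also have "\<dots> = envelope \<alpha> G z powr \<alpha>"
      by (simp add: powr_mult_base[OF less_imp_le[OF envelope_pos]])
    finally show "norm (indicator {0..} z * (G z * envelope \<alpha> G z powr (\<alpha> - 1)))
        \<le> norm (indicator {0..} z * envelope \<alpha> G z powr \<alpha>)"
      using G01[of z] by (auto simp: indicator_def)
  qed
qed simp

end

section \<open>Strong laws of large numbers\<close>

context prob_space
begin

lemma integrable_bounded:
  fixes f :: "'a \<Rightarrow> real"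
  assumes "f \<in> borel_measurable M" "\<And>x. x \<in> space M \<Longrightarrow> \<bar>f x\<bar> \<le> B"
  shows "integrable M f"
  by (rule integrable_const_bound[where B=B]) (use assms in auto)

lemma distr_comp_eq:
  fixes Z V :: "'a \<Rightarrow> real" and f :: "real \<Rightarrow> real"
  assumes "distr M borel Z = distr M borel V" "Z \<in> borel_measurable M" "V \<in> borel_measurable M"
    "f \<in> borel_measurable borel"
  shows "distr M borel (\<lambda>x. f (Z x)) = distr M borel (\<lambda>x. f (V x))"
proof -
  have "distr M borel (\<lambda>x. f (Z x)) = distr (distr M borel Z) borel f"
    using assms by (subst distr_distr) (auto simp: comp_def)
  also have "\<dots> = distr (distr M borel V) borel f" using assms(1) by simp
  also have "\<dots> = distr M borel (\<lambda>x. f (V x))"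
    using assms by (subst distr_distr) (auto simp: comp_def)
  finally show ?thesis .
qed

lemma expectation_comp_eq_of_distr_eq:
  fixes Z V :: "'a \<Rightarrow> real" and f :: "real \<Rightarrow> real"
  assumes "distr M borel Z = distr M borel V" "Z \<in> borel_measurable M" "V \<in> borel_measurable M"
    "f \<in> borel_measurable borel"
  shows "expectation (\<lambda>x. f (Z x)) = expectation (\<lambda>x. f (V x))"
proof -
  have "expectation (\<lambda>x. f (Z x)) = integral\<^sup>L (distr M borel Z) f"
    using assms by (intro integral_distr[symmetric]) auto
  also have "\<dots> = integral\<^sup>L (distr M borel V) f" using assms(1) by simp
  also have "\<dots> = expectation (\<lambda>x. f (V x))"
    using assms by (intro integral_distr) auto
  finally show ?thesis .
qed

lemma prob_greater_eq_of_distr_eq: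
  fixes Z V :: "'a \<Rightarrow> real"
  assumes "distr M borel Z = distr M borel V" "Z \<in> borel_measurable M" "V \<in> borel_measurable M"
  shows "prob {x\<in>space M. t < Z x} = prob {x\<in>space M. t < V x}"
proof -
  have "prob {x\<in>space M. t < Z x} = measure (distr M borel Z) {t<..}"
    using assms by (subst measure_distr) (auto intro!: arg_cong[where f=prob])
  also have "\<dots> = measure (distr M borel V) {t<..}" using assms(1) by simp
  also have "\<dots> = prob {x\<in>space M. t < V x}"
    using assms by (subst measure_distr) (auto intro!: arg_cong[where f=prob])
  finally show ?thesis .
qed

lemma variance_add_indep:
  fixes A S :: "'a \<Rightarrow> real"
  assumes ind: "indep_var borel A borel S"
    and [measurable]: "A \<in> borel_measurable M" "S \<in> borel_measurable M"
    and A: "\<And>x. x \<in> space M \<Longrightarrow> \<bar>A x\<bar> \<le> a" and S: "\<And>x. x \<in> space M \<Longrightarrow> \<bar>S x\<bar> \<le> b"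
  shows "variance (\<lambda>x. A x + S x) = variance A + variance S"
proof -
  define \<mu> \<nu> where "\<mu> = expectation A" and "\<nu> = expectation S"
  have intA: "integrable M A" by (rule integrable_bounded[OF _ A]) measurable
  have intS: "integrable M S" by (rule integrable_bounded[OF _ S]) measurable
  have square_integrable: "integrable M (\<lambda>x. (f x - c)\<^sup>2)"
    if [measurable]: "f \<in> borel_measurable M" and f: "\<And>x. x \<in> space M \<Longrightarrow> \<bar>f x\<bar> \<le> B"
    for f :: "'a \<Rightarrow> real" and c B
  proof (rule integrable_bounded[where B="(B + \<bar>c\<bar>)\<^sup>2"])
    fix x assume "x \<in> space M"
    then have "\<bar>f x - c\<bar> \<le> B + \<bar>c\<bar>" using f[of x] by linarith
    then have "\<bar>f x - c\<bar>\<^sup>2 \<le> (B + \<bar>c\<bar>)\<^sup>2" by (intro power_mono) auto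
    then show "\<bar>(f x - c)\<^sup>2\<bar> \<le> (B + \<bar>c\<bar>)\<^sup>2" by simp
  qed simp
  have ind': "indep_var borel (\<lambda>x. A x - \<mu>) borel (\<lambda>x. S x - \<nu>)"
    using indep_var_compose[OF ind, of "\<lambda>v. v - \<mu>" borel "\<lambda>v. v - \<nu>" borel] by (simp add: comp_def)
  have intA': "integrable M (\<lambda>x. A x - \<mu>)" and intS': "integrable M (\<lambda>x. S x - \<nu>)"
    using intA intS by auto
  have cross: "expectation (\<lambda>x. (A x - \<mu>) * (S x - \<nu>)) = 0"
    using indep_var_lebesgue_integral[OF ind' intA' intS'] intA intS by (simp add: \<mu>_def \<nu>_def prob_space)
  have square: "(A x + S x - (\<mu> + \<nu>))\<^sup>2 = (A x - \<mu>)\<^sup>2 + (S x - \<nu>)\<^sup>2 + 2 * ((A x - \<mu>) * (S x - \<nu>))" for x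
    by (simp add: power2_eq_square algebra_simps)
  have mean: "expectation (\<lambda>x. A x + S x) = \<mu> + \<nu>" using intA intS by (simp add: \<mu>_def \<nu>_def)
  have "variance (\<lambda>x. A x + S x) =
      expectation (\<lambda>x. (A x - \<mu>)\<^sup>2 + (S x - \<nu>)\<^sup>2 + 2 * ((A x - \<mu>) * (S x - \<nu>)))"
    by (simp only: mean square)
  also have "\<dots> = expectation (\<lambda>x. (A x - \<mu>)\<^sup>2) + expectation (\<lambda>x. (S x - \<nu>)\<^sup>2)
      + 2 * expectation (\<lambda>x. (A x - \<mu>) * (S x - \<nu>))"
    using square_integrable[OF _ A] square_integrable[OF _ S] indep_var_integrable[OF ind' intA' intS']
    by simp
  also have "\<dots> = variance A + variance S"
    using cross by (simp add: \<mu>_def \<nu>_def)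
  finally show ?thesis .
qed

lemma variance_sum_indep:
  fixes Y :: "nat \<Rightarrow> 'a \<Rightarrow> real"
  assumes "finite I" and indep: "indep_vars (\<lambda>_. borel) Y I"
    and bnd: "\<And>i x. i \<in> I \<Longrightarrow> x \<in> space M \<Longrightarrow> \<bar>Y i x\<bar> \<le> B"
  shows "variance (\<lambda>x. \<Sum>i\<in>I. Y i x) = (\<Sum>i\<in>I. variance (Y i))"
  using assms(1) indep bnd
proof (induction I rule: finite_induct)
  case (insert i I)
  have [measurable]: "\<And>k. k \<in> insert i I \<Longrightarrow> random_variable borel (Y k)"
    using insert.prems(1) unfolding indep_vars_def by auto
  have "variance (\<lambda>x. \<Sum>k\<in>insert i I. Y k x) = variance (\<lambda>x. Y i x + (\<Sum>k\<in>I. Y k x))"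
    by (simp only: sum.insert[OF insert.hyps])
  also have "\<dots> = variance (Y i) + variance (\<lambda>x. \<Sum>k\<in>I. Y k x)"
  proof (rule variance_add_indep)
    show "indep_var borel (Y i) borel (\<lambda>x. \<Sum>k\<in>I. Y k x)"
      using insert.hyps insert.prems(1) by (intro indep_vars_sum) auto
    show "\<bar>(\<Sum>k\<in>I. Y k x)\<bar> \<le> real (card I) * B" if "x \<in> space M" for x
    proof -
      have "\<bar>\<Sum>k\<in>I. Y k x\<bar> \<le> (\<Sum>k\<in>I. \<bar>Y k x\<bar>)" by (rule sum_abs)
      also have "\<dots> \<le> (\<Sum>k\<in>I. B)" using insert.prems(2) that by (intro sum_mono) auto
      finally show ?thesis by simp
    qed
  qed (use insert.prems(2) in auto)
  also have "\<dots> = variance (Y i) + (\<Sum>k\<in>I. variance (Y k))"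
    using insert.IH[OF indep_vars_subset[OF insert.prems(1)]] insert.prems(2) by auto
  also have "\<dots> = (\<Sum>k\<in>insert i I. variance (Y k))"
    by (simp only: sum.insert[OF insert.hyps])
  finally show ?case .
qed simp

lemma strong_law_bounded:
  fixes W :: "nat \<Rightarrow> 'a \<Rightarrow> real" and V :: "'a \<Rightarrow> real"
  assumes indep: "indep_vars (\<lambda>_. borel) W UNIV"
    and distr: "\<And>i. distr M borel (W i) = distr M borel V"
    and [measurable]: "random_variable borel V"
    and bnd: "\<And>x. x \<in> space M \<Longrightarrow> V x \<in> {a..b}" and ab: "a < b"
  shows "AE x in M. (\<lambda>n. (\<Sum>i<n. W i x) / real n) \<longlonglongrightarrow> expectation V"
proof (rule AE_tendsto_of_AE_eventually_dist_less)
  fix e :: real assume e: "e > 0"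
  have [measurable]: "\<And>i. random_variable borel (W i)"
    using indep unfolding indep_vars_def by auto
  define \<mu> where "\<mu> = expectation V"
  define A where "A n = {x\<in>space M. \<bar>(\<Sum>i<Suc n. W i x) / real (Suc n) - \<mu>\<bar> \<ge> e}" for n
  have [measurable]: "A n \<in> sets M" for n unfolding A_def by measurable
  define c where "c = 2 * e\<^sup>2 / (b - a)\<^sup>2"
  have c: "c > 0" using e ab unfolding c_def by auto
  \<comment> \<open>Hoeffding's inequality makes the deviation probabilities geometrically small\<close>
  have bound: "prob (A n) \<le> 2 * exp (-c) ^ Suc n" for n
  proof -
    interpret Hoeffding_ineq_iid M "{..<Suc n}" W V a b \<mu>
    proof unfold_locales
      show "indep_vars (\<lambda>_. borel) W {..<Suc n}" by (rule indep_vars_subset[OF indep]) auto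
      show "AE x in M. V x \<in> {a..b}" using bnd by (intro AE_I2) auto
    qed (auto simp: distr \<mu>_def)
    have "-2 * real (Suc n) * e\<^sup>2 / (b - a)\<^sup>2 = -(real (Suc n) * (2 * e\<^sup>2) / (b - a)\<^sup>2)"
      by (simp only: mult_minus_left mult.assoc mult.left_commute[of 2] minus_divide_left)
    also have "\<dots> = real (Suc n) * (-c)"
      unfolding c_def by (simp only: times_divide_eq_right mult_minus_right)
    moreover have "prob (A n) \<le> 2 * exp (-2 * real (Suc n) * e\<^sup>2 / (b - a)\<^sup>2)"
      using Hoeffding_ineq_abs_ge'[of e] e ab lessThan_empty_iff unfolding A_def by simp
    ultimately show ?thesis by (simp only: exp_of_nat_mult)
  qed
  have "summable (\<lambda>n. measure M (A n))"
  proof (rule summable_comparison_test'[where N=0])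
    show "summable (\<lambda>n. 2 * exp (-c) ^ Suc n)"
      using c by (intro summable_mult summable_Suc_iff[THEN iffD2] summable_geometric) auto
    show "norm (measure M (A n)) \<le> 2 * exp (-c) ^ Suc n" for n using bound[of n] by simp
  qed
  then have "AE x in M. eventually (\<lambda>n. x \<in> space M - A n) sequentially"
    by (intro borel_cantelli_AE1) (simp_all add: emeasure_eq_measure)
  then show "AE x in M. eventually (\<lambda>n. dist ((\<Sum>i<n. W i x) / real n) (expectation V) < e) sequentially"
  proof (rule AE_mp, intro AE_I2 impI)
    fix x assume "eventually (\<lambda>n. x \<in> space M - A n) sequentially"
    then have "eventually (\<lambda>n. \<bar>(\<Sum>i<Suc n. W i x) / real (Suc n) - \<mu>\<bar> < e) sequentially"
      by (auto simp: A_def not_le elim: eventually_mono)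
    then show "eventually (\<lambda>n. dist ((\<Sum>i<n. W i x) / real n) (expectation V) < e) sequentially"
      unfolding \<mu>_def dist_real_def by (subst eventually_sequentially_Suc[symmetric])
  qed
qed

lemma summable_dyadic_tail_prob:
  fixes V :: "'a \<Rightarrow> real"
  assumes [measurable]: "random_variable borel V"
    and Vnn: "\<And>x. x \<in> space M \<Longrightarrow> V x \<ge> 0" and intV: "integrable M V"
  shows "summable (\<lambda>j. 2^j * prob {x\<in>space M. 2^j < V x})"
proof (rule summableI_nonneg_bounded[where x="2 * expectation V"])
  fix J :: nat
  have int: "integrable M (\<lambda>x. (2::real)^j * indicator {x\<in>space M. 2^j < V x} x)" for j :: nat
    by (rule integrable_bounded[where B="2^j"]) (auto simp: indicator_def)
  have "(\<Sum>j<J. (2::real)^j * prob {x\<in>space M. 2^j < V x})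
       = expectation (\<lambda>x. \<Sum>j<J. (2::real)^j * indicator {x\<in>space M. 2^j < V x} x)"
    using int by (subst Bochner_Integration.integral_sum) (auto simp: integral_indicator Int_absorb2)
  also have "\<dots> \<le> expectation (\<lambda>x. 2 * V x)"
  proof (rule integral_mono)
    show "integrable M (\<lambda>x. \<Sum>j<J. (2::real)^j * indicator {x\<in>space M. 2^j < V x} x)"
      by (intro Bochner_Integration.integrable_sum int)
    show "integrable M (\<lambda>x. 2 * V x)" using intV by auto
    fix x assume x: "x \<in> space M"
    have "(\<Sum>j<J. (2::real)^j * indicator {x\<in>space M. 2^j < V x} x) = (\<Sum>j<J. if 2^j < V x then 2^j else 0)"
      using x by (intro sum.cong) (auto simp: indicator_def)
    also have "\<dots> \<le> 2 * V x" using sum_powers_of_two_below_le[OF Vnn[OF x]] .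
    finally show "(\<Sum>j<J. (2::real)^j * indicator {x\<in>space M. 2^j < V x} x) \<le> 2 * V x" .
  qed
  finally show "(\<Sum>j<J. (2::real)^j * prob {x\<in>space M. 2^j < V x}) \<le> 2 * expectation V" by simp
qed simp

lemma summable_truncated_second_moment:
  fixes V :: "'a \<Rightarrow> real"
  assumes [measurable]: "random_variable borel V"
    and Vnn: "\<And>x. x \<in> space M \<Longrightarrow> V x \<ge> 0" and intV: "integrable M V"
  shows "summable (\<lambda>j. expectation (\<lambda>x. (truncate_at (2^j) (V x))\<^sup>2) / 2^j)"
proof (rule summableI_nonneg_bounded[where x="2 * expectation V"])
  show "0 \<le> expectation (\<lambda>x. (truncate_at (2^j) (V x))\<^sup>2) / 2^j" for j
    by (intro divide_nonneg_pos integral_nonneg_AE AE_I2) auto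
  fix J :: nat
  have int: "integrable M (\<lambda>x. (truncate_at (2^j) (V x))\<^sup>2 / 2^j)" for j :: nat
  proof (rule integrable_bounded[where B="(2^j)\<^sup>2"])
    fix x assume x: "x \<in> space M"
    have "\<bar>truncate_at (2^j) (V x)\<bar> \<le> 2^j" using Vnn[OF x] by (simp add: truncate_at_def)
    then have "(truncate_at (2^j) (V x))\<^sup>2 \<le> (2^j)\<^sup>2" by (simp add: power2_le_iff_abs_le)
    moreover have "(truncate_at (2^j) (V x))\<^sup>2 / 2^j \<le> (truncate_at (2^j) (V x))\<^sup>2 / 1"
      by (rule divide_left_mono) auto
    ultimately show "\<bar>(truncate_at (2^j) (V x))\<^sup>2 / 2^j\<bar> \<le> (2^j)\<^sup>2" by simp
  qed (simp add: truncate_at_def)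
  have "(\<Sum>j<J. expectation (\<lambda>x. (truncate_at (2^j) (V x))\<^sup>2) / 2^j)
      = expectation (\<lambda>x. \<Sum>j<J. (truncate_at (2^j) (V x))\<^sup>2 / 2^j)"
    using int by (subst Bochner_Integration.integral_sum) auto
  also have "\<dots> \<le> expectation (\<lambda>x. 2 * V x)"
  proof (rule integral_mono)
    show "integrable M (\<lambda>x. \<Sum>j<J. (truncate_at (2^j) (V x))\<^sup>2 / 2^j)"
      by (intro Bochner_Integration.integrable_sum int)
    show "integrable M (\<lambda>x. 2 * V x)" using intV by auto
    fix x assume x: "x \<in> space M"
    have "(\<Sum>j<J. (truncate_at (2^j) (V x))\<^sup>2 / 2^j) = (\<Sum>j<J. (if V x \<le> 2^j then (V x)\<^sup>2 else 0) / 2^j)"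
      by (intro sum.cong) (auto simp: truncate_at_def)
    also have "\<dots> \<le> 2 * V x" using sum_square_over_powers_of_two_above_le[OF Vnn[OF x]] .
    finally show "(\<Sum>j<J. (truncate_at (2^j) (V x))\<^sup>2 / 2^j) \<le> 2 * V x" .
  qed
  finally show "(\<Sum>j<J. expectation (\<lambda>x. (truncate_at (2^j) (V x))\<^sup>2) / 2^j) \<le> 2 * expectation V"
    by simp
qed

lemma AE_eventually_dyadic_summands_le:
  fixes W :: "nat \<Rightarrow> 'a \<Rightarrow> real" and V :: "'a \<Rightarrow> real"
  assumes [measurable]: "\<And>i. random_variable borel (W i)" "random_variable borel V"
    and distr: "\<And>i. distr M borel (W i) = distr M borel V"
    and Vnn: "\<And>x. x \<in> space M \<Longrightarrow> V x \<ge> 0" and intV: "integrable M V"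
  shows "AE x in M. eventually (\<lambda>j. \<forall>i<2^j. W i x \<le> 2^j) sequentially"
proof -
  define B where "B j = (\<Union>i<2^j. {x\<in>space M. 2^j < W i x})" for j :: nat
  have [measurable]: "B j \<in> sets M" for j unfolding B_def by measurable
  have probB: "prob (B j) \<le> 2^j * prob {x\<in>space M. 2^j < V x}" for j
  proof -
    have "prob (B j) \<le> (\<Sum>i<2^j. prob {x\<in>space M. 2^j < W i x})"
      unfolding B_def by (intro finite_measure_subadditive_finite) auto
    also have "\<dots> = (\<Sum>i<(2::nat)^j. prob {x\<in>space M. 2^j < V x})"
      by (intro sum.cong refl prob_greater_eq_of_distr_eq distr) auto
    finally show ?thesis by simp
  qed
  have "summable (\<lambda>j. prob (B j))"
  proof (rule summable_comparison_test'[where N=0])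
    show "summable (\<lambda>j. 2^j * prob {x\<in>space M. 2^j < V x})"
      by (rule summable_dyadic_tail_prob[OF _ Vnn intV]) simp
    show "norm (prob (B j)) \<le> 2^j * prob {x\<in>space M. 2^j < V x}" for j using probB[of j] by simp
  qed
  then have "AE x in M. eventually (\<lambda>j. x \<in> space M - B j) sequentially"
    by (intro borel_cantelli_AE1) (simp_all add: emeasure_eq_measure)
  then show ?thesis
    by (rule AE_mp) (intro AE_I2 impI, elim eventually_mono, auto simp: B_def not_less)
qed

lemma variance_truncated_dyadic_block_le:
  fixes W :: "nat \<Rightarrow> 'a \<Rightarrow> real" and V :: "'a \<Rightarrow> real"
  assumes indep: "indep_vars (\<lambda>_. borel) W UNIV"
    and distr: "\<And>i. distr M borel (W i) = distr M borel V"
    and [measurable]: "random_variable borel V"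
    and Wnn: "\<And>i x. x \<in> space M \<Longrightarrow> W i x \<ge> 0"
  shows "variance (\<lambda>x. \<Sum>i<2^j. truncate_at (2^j) (W i x)) \<le> 2^j * expectation (\<lambda>x. (truncate_at (2^j) (V x))\<^sup>2)"
proof -
  have [measurable]: "\<And>i. random_variable borel (W i)"
    using indep unfolding indep_vars_def by auto
  define Y where "Y i x = truncate_at (2^j) (W i x)" for i x
  have [measurable]: "Y i \<in> borel_measurable M" for i unfolding Y_def truncate_at_def by measurable
  have Ybnd: "\<bar>Y i x\<bar> \<le> 2^j" if "x \<in> space M" for i x
    using Wnn[OF that] unfolding Y_def truncate_at_def by auto
  have "variance (\<lambda>x. \<Sum>i<2^j. Y i x) = (\<Sum>i<2^j. variance (Y i))"
  proof (rule variance_sum_indep[where B="2^j"])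
    show "indep_vars (\<lambda>_. borel) Y {..<2^j}"
      unfolding Y_def by (rule indep_vars_compose2[OF indep_vars_subset[OF indep]]) (auto simp: truncate_at_def)
  qed (auto intro: Ybnd)
  also have "\<dots> \<le> (\<Sum>i<(2::nat)^j. expectation (\<lambda>x. (truncate_at (2^j) (V x))\<^sup>2))"
  proof (intro sum_mono)
    fix i
    have "integrable M (\<lambda>x. (Y i x)\<^sup>2)"
    proof (rule integrable_bounded[where B="(2^j)\<^sup>2"])
      fix x assume "x \<in> space M"
      then have "\<bar>Y i x\<bar> \<le> 2^j" by (rule Ybnd)
      then show "\<bar>(Y i x)\<^sup>2\<bar> \<le> (2^j)\<^sup>2" by (simp add: power2_le_iff_abs_le)
    qed simp
    moreover have "integrable M (Y i)" by (rule integrable_bounded[OF _ Ybnd]) simp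
    ultimately have "variance (Y i) = expectation (\<lambda>x. (Y i x)\<^sup>2) - (expectation (Y i))\<^sup>2"
      by (intro variance_eq)
    also have "expectation (\<lambda>x. (Y i x)\<^sup>2) = expectation (\<lambda>x. (truncate_at (2^j) (V x))\<^sup>2)"
      unfolding Y_def by (rule expectation_comp_eq_of_distr_eq[OF distr]) (auto simp: truncate_at_def)
    finally show "variance (Y i) \<le> expectation (\<lambda>x. (truncate_at (2^j) (V x))\<^sup>2)" by simp
  qed
  finally show ?thesis unfolding Y_def by simp
qed

lemma expectation_truncated_dyadic_block_le:
  fixes W :: "nat \<Rightarrow> 'a \<Rightarrow> real" and V :: "'a \<Rightarrow> real"
  assumes [measurable]: "\<And>i. random_variable borel (W i)" "random_variable borel V"
    and distr: "\<And>i. distr M borel (W i) = distr M borel V"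
    and Vnn: "\<And>x. x \<in> space M \<Longrightarrow> V x \<ge> 0" and Wnn: "\<And>i x. x \<in> space M \<Longrightarrow> W i x \<ge> 0"
    and intV: "integrable M V"
  shows "expectation (\<lambda>x. \<Sum>i<2^j. truncate_at (2^j) (W i x)) \<le> 2^j * expectation V"
proof -
  have int: "integrable M (\<lambda>x. truncate_at (2^j) (V x))"
    by (rule integrable_bounded[where B="2^j"]) (use Vnn in \<open>auto simp: truncate_at_def\<close>)
  have "expectation (\<lambda>x. \<Sum>i<2^j. truncate_at (2^j) (W i x))
      = (\<Sum>i<2^j. expectation (\<lambda>x. truncate_at (2^j) (W i x)))"
    by (intro Bochner_Integration.integral_sum integrable_bounded[where B="2^j"])
      (use Wnn in \<open>auto simp: truncate_at_def\<close>)
  also have "\<dots> = (\<Sum>i<(2::nat)^j. expectation (\<lambda>x. truncate_at (2^j) (V x)))"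
    by (intro sum.cong refl expectation_comp_eq_of_distr_eq[OF distr]) (auto simp: truncate_at_def)
  also have "\<dots> = 2^j * expectation (\<lambda>x. truncate_at (2^j) (V x))" by simp
  also have "expectation (\<lambda>x. truncate_at (2^j) (V x)) \<le> expectation V"
    using Vnn by (intro integral_mono[OF int intV]) (simp add: truncate_at_def)
  finally show ?thesis by simp
qed

lemma AE_eventually_truncated_dyadic_sum_le:
  fixes W :: "nat \<Rightarrow> 'a \<Rightarrow> real" and V :: "'a \<Rightarrow> real"
  assumes indep: "indep_vars (\<lambda>_. borel) W UNIV"
    and distr: "\<And>i. distr M borel (W i) = distr M borel V"
    and rvV[measurable]: "random_variable borel V"
    and Vnn: "\<And>x. x \<in> space M \<Longrightarrow> V x \<ge> 0" and Wnn: "\<And>i x. x \<in> space M \<Longrightarrow> W i x \<ge> 0"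
    and intV: "integrable M V" and e: "e > 0"
  shows "AE x in M. eventually (\<lambda>j. (\<Sum>i<2^j. truncate_at (2^j) (W i x)) \<le> 2^j * (expectation V + e)) sequentially"
proof -
  have [measurable]: "\<And>i. random_variable borel (W i)"
    using indep unfolding indep_vars_def by auto
  define T where "T j x = (\<Sum>i<2^j. truncate_at (2^j) (W i x))" for j x
  define q where "q j = expectation (\<lambda>x. (truncate_at (2^j) (V x))\<^sup>2)" for j
  have [measurable]: "T j \<in> borel_measurable M" for j unfolding T_def truncate_at_def by measurable
  define D where "D j = {x\<in>space M. e * 2^j \<le> \<bar>T j x - expectation (T j)\<bar>}" for j
  have [measurable]: "D j \<in> sets M" for j unfolding D_def by measurable
  \<comment> \<open>Chebyshev on the dyadic block \<open>T j\<close>; the bounds are summable by the truncated second moment estimate\<close>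
  have probD: "prob (D j) \<le> q j / 2^j / e\<^sup>2" for j
  proof -
    have "integrable M (\<lambda>x. (T j x)\<^sup>2)"
    proof (rule integrable_bounded[where B="(2^j * 2^j)\<^sup>2"])
      fix x assume x: "x \<in> space M"
      have "\<bar>T j x\<bar> \<le> (\<Sum>i<(2::nat)^j. \<bar>truncate_at (2^j) (W i x)\<bar>)" unfolding T_def by (rule sum_abs)
      also have "\<dots> \<le> (\<Sum>i<(2::nat)^j. 2^j)"
        using Wnn[OF x] by (intro sum_mono) (simp add: truncate_at_def)
      finally have "\<bar>T j x\<bar> \<le> 2^j * 2^j" by simp
      then show "\<bar>(T j x)\<^sup>2\<bar> \<le> (2^j * 2^j)\<^sup>2" by (simp add: power2_le_iff_abs_le)
    qed simp
    then have "prob (D j) \<le> variance (T j) / (e * 2^j)\<^sup>2"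
      unfolding D_def by (intro Chebyshev_inequality) (use e in auto)
    also have "\<dots> \<le> 2^j * q j / (e * 2^j)\<^sup>2"
      unfolding T_def q_def
      by (intro divide_right_mono variance_truncated_dyadic_block_le[OF indep distr rvV Wnn] zero_le_power2)
    also have "\<dots> = q j / 2^j / e\<^sup>2"
      by (simp add: power_mult_distrib power2_eq_square)
    finally show ?thesis .
  qed
  have "summable (\<lambda>j. prob (D j))"
  proof (rule summable_comparison_test'[where N=0])
    show "summable (\<lambda>j. q j / 2^j / e\<^sup>2)"
      using summable_truncated_second_moment[OF rvV Vnn intV] unfolding q_def by (rule summable_divide)
    show "norm (prob (D j)) \<le> q j / 2^j / e\<^sup>2" for j using probD[of j] by simp
  qed
  then have "AE x in M. eventually (\<lambda>j. x \<in> space M - D j) sequentially"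
    by (intro borel_cantelli_AE1) (simp_all add: emeasure_eq_measure)
  then show ?thesis
  proof (rule AE_mp, intro AE_I2 impI)
    fix x assume "eventually (\<lambda>j. x \<in> space M - D j) sequentially"
    then show "eventually (\<lambda>j. (\<Sum>i<2^j. truncate_at (2^j) (W i x)) \<le> 2^j * (expectation V + e)) sequentially"
    proof (elim eventually_mono)
      fix j assume "x \<in> space M - D j"
      then have "T j x \<le> expectation (T j) + e * 2^j" by (auto simp: D_def)
      moreover have "expectation (T j) \<le> 2^j * expectation V"
        unfolding T_def by (rule expectation_truncated_dyadic_block_le[OF _ rvV distr Vnn Wnn intV]) simp
      moreover have "2^j * (expectation V + e) = 2^j * expectation V + e * 2^j"
        by (simp add: algebra_simps)
      ultimately show "(\<Sum>i<2^j. truncate_at (2^j) (W i x)) \<le> 2^j * (expectation V + e)"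
        unfolding T_def by linarith
    qed
  qed
qed

lemma AE_eventually_mean_le_twice_expectation:
  fixes W :: "nat \<Rightarrow> 'a \<Rightarrow> real" and V :: "'a \<Rightarrow> real"
  assumes indep: "indep_vars (\<lambda>_. borel) W UNIV"
    and distr: "\<And>i. distr M borel (W i) = distr M borel V"
    and rvV[measurable]: "random_variable borel V"
    and Vnn: "\<And>x. x \<in> space M \<Longrightarrow> V x \<ge> 0" and Wnn: "\<And>i x. x \<in> space M \<Longrightarrow> W i x \<ge> 0"
    and intV: "integrable M V"
  shows "AE x in M. \<forall>e>0. eventually (\<lambda>n. (\<Sum>i<n. W i x) / real n \<le> 2 * expectation V + e) sequentially"
proof (rule AE_all_pos_mono)
  fix e :: real assume e: "e > 0"
  have [measurable]: "\<And>i. random_variable borel (W i)"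
    using indep unfolding indep_vars_def by auto
  have \<mu>: "expectation V \<ge> 0" using Vnn by (intro integral_nonneg_AE AE_I2) auto
  have "AE x in M. eventually (\<lambda>j. \<forall>i<2^j. W i x \<le> 2^j) sequentially"
    by (rule AE_eventually_dyadic_summands_le[OF _ rvV distr Vnn intV]) simp
  moreover have "AE x in M. eventually (\<lambda>j.
      (\<Sum>i<2^j. truncate_at (2^j) (W i x)) \<le> 2^j * (expectation V + e / 2)) sequentially"
    by (rule AE_eventually_truncated_dyadic_sum_le[OF indep distr rvV Vnn Wnn intV]) (use e in auto)
  ultimately show "AE x in M. eventually (\<lambda>n. (\<Sum>i<n. W i x) / real n \<le> 2 * expectation V + e) sequentially"
    using AE_space
  proof eventually_elim
    case (elim x)
    have "eventually (\<lambda>j. (\<Sum>i<2^j. W i x) \<le> 2^j * (expectation V + e / 2)) sequentially"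
      using elim(1,2)
    proof eventually_elim
      case (elim j)
      then have "(\<Sum>i<2^j. W i x) = (\<Sum>i<2^j. truncate_at (2^j) (W i x))"
        by (intro sum.cong) (auto simp: truncate_at_def)
      with elim show ?case by simp
    qed
    then have "eventually (\<lambda>n. (\<Sum>i<n. W i x) / real n \<le> 2 * (expectation V + e / 2)) sequentially"
      by (rule eventually_mean_le_of_dyadic[rotated 2])
         (use \<mu> e elim(3) Wnn in \<open>auto intro: sum_mono2\<close>)
    then show ?case by (simp add: algebra_simps)
  qed
next
  fix e e' x
  assume "eventually (\<lambda>n. (\<Sum>i<n. W i x) / real n \<le> 2 * expectation V + e) sequentially" "e \<le> e'"
  then show "eventually (\<lambda>n. (\<Sum>i<n. W i x) / real n \<le> 2 * expectation V + e') sequentially"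
    by (elim eventually_mono) linarith
qed

lemma tendsto_expectation_excess_over_level:
  fixes V :: "'a \<Rightarrow> real"
  assumes [measurable]: "random_variable borel V"
    and Vnn: "\<And>x. x \<in> space M \<Longrightarrow> V x \<ge> 0" and intV: "integrable M V"
  shows "(\<lambda>K. expectation (\<lambda>x. V x - min (V x) (real K))) \<longlonglongrightarrow> 0"
proof -
  have "(\<lambda>K. expectation (\<lambda>x. V x - min (V x) (real K))) \<longlonglongrightarrow> expectation (\<lambda>x. 0)"
  proof (rule integral_dominated_convergence[where w=V])
    show "AE x in M. (\<lambda>K. V x - min (V x) (real K)) \<longlonglongrightarrow> 0"
    proof (intro AE_I2)
      fix x
      obtain N :: nat where "V x < real N" using reals_Archimedean2 by blast
      then have "eventually (\<lambda>K. V x - min (V x) (real K) = 0) sequentially"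
        unfolding eventually_sequentially by (intro exI[of _ N]) auto
      then show "(\<lambda>K. V x - min (V x) (real K)) \<longlonglongrightarrow> 0" by (rule tendsto_eventually)
    qed
    show "AE x in M. norm (V x - min (V x) (real K)) \<le> V x" for K
      using Vnn by (intro AE_I2) auto
  qed (use intV in auto)
  then show ?thesis by simp
qed

text \<open>Splitting at level \<open>c\<close>: the bounded part obeys the strong law, and the excess over \<open>c\<close>
  costs at most twice its expectation.\<close>

lemma AE_eventually_mean_le_expectation_plus_excess:
  fixes W :: "nat \<Rightarrow> 'a \<Rightarrow> real" and V :: "'a \<Rightarrow> real"
  assumes indep: "indep_vars (\<lambda>_. borel) W UNIV"
    and distr: "\<And>i. distr M borel (W i) = distr M borel V"
    and rvV[measurable]: "random_variable borel V"
    and Vnn: "\<And>x. x \<in> space M \<Longrightarrow> V x \<ge> 0" and Wnn: "\<And>i x. x \<in> space M \<Longrightarrow> W i x \<ge> 0"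
    and intV: "integrable M V" and c: "c > 0"
  shows "AE x in M. \<forall>e>0. eventually (\<lambda>n. (\<Sum>i<n. W i x) / real n
           \<le> expectation V + expectation (\<lambda>x. V x - min (V x) c) + e) sequentially"
proof -
  define b where "b v = min v c" for v
  define t where "t v = v - b v" for v
  have [measurable]: "b \<in> borel_measurable borel" "t \<in> borel_measurable borel"
    unfolding t_def b_def by measurable
  have intb: "integrable M (\<lambda>x. b (V x))"
    by (rule integrable_bounded[where B=c]) (use Vnn c in \<open>auto simp: b_def\<close>)
  have intt: "integrable M (\<lambda>x. t (V x))"
    unfolding t_def using intV intb by auto
  have "expectation V = expectation (\<lambda>x. b (V x) + t (V x))" by (simp add: t_def)
  also have "\<dots> = expectation (\<lambda>x. b (V x)) + expectation (\<lambda>x. t (V x))"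
    using intb intt by simp
  finally have split: "expectation V = expectation (\<lambda>x. b (V x)) + expectation (\<lambda>x. t (V x))" .
  have "AE x in M. (\<lambda>n. (\<Sum>i<n. b (W i x)) / real n) \<longlonglongrightarrow> expectation (\<lambda>x. b (V x))"
  proof (rule strong_law_bounded[where a=0 and b=c])
    show "indep_vars (\<lambda>_. borel) (\<lambda>i x. b (W i x)) UNIV"
      by (rule indep_vars_compose2[OF indep]) auto
    show "distr M borel (\<lambda>x. b (W i x)) = distr M borel (\<lambda>x. b (V x))" for i
      using indep unfolding indep_vars_def by (intro distr_comp_eq[OF distr]) auto
  qed (use Vnn c in \<open>auto simp: b_def\<close>)
  moreover have "AE x in M. \<forall>e>0. eventually (\<lambda>n.
      (\<Sum>i<n. t (W i x)) / real n \<le> 2 * expectation (\<lambda>x. t (V x)) + e) sequentially"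
  proof (rule AE_eventually_mean_le_twice_expectation)
    show "indep_vars (\<lambda>_. borel) (\<lambda>i x. t (W i x)) UNIV"
      by (rule indep_vars_compose2[OF indep]) auto
    show "distr M borel (\<lambda>x. t (W i x)) = distr M borel (\<lambda>x. t (V x))" for i
      using indep unfolding indep_vars_def by (intro distr_comp_eq[OF distr]) auto
  qed (use intt in \<open>auto simp: t_def b_def\<close>)
  ultimately show ?thesis
  proof eventually_elim
    case (elim x)
    show ?case
    proof (intro allI impI)
      fix e :: real assume e: "e > 0"
      have "eventually (\<lambda>n. (\<Sum>i<n. b (W i x)) / real n < expectation (\<lambda>x. b (V x)) + e / 2) sequentially"
        by (rule order_tendstoD(2)[OF elim(1)]) (use e in auto)
      moreover have "eventually (\<lambda>n. (\<Sum>i<n. t (W i x)) / real n \<le> 2 * expectation (\<lambda>x. t (V x)) + e / 2) sequentially"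
        using elim(2) e by simp
      ultimately show "eventually (\<lambda>n. (\<Sum>i<n. W i x) / real n
          \<le> expectation V + expectation (\<lambda>x. V x - min (V x) c) + e) sequentially"
      proof eventually_elim
        case (elim n)
        have "(\<Sum>i<n. W i x) / real n = (\<Sum>i<n. b (W i x)) / real n + (\<Sum>i<n. t (W i x)) / real n"
          by (simp add: t_def sum.distrib[symmetric] add_divide_distrib[symmetric])
        with elim split show ?case by (simp add: t_def b_def)
      qed
    qed
  qed
qed

lemma AE_eventually_mean_le_expectation:
  fixes W :: "nat \<Rightarrow> 'a \<Rightarrow> real" and V :: "'a \<Rightarrow> real"
  assumes indep: "indep_vars (\<lambda>_. borel) W UNIV"
    and distr: "\<And>i. distr M borel (W i) = distr M borel V"
    and rvV[measurable]: "random_variable borel V"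
    and Vnn: "\<And>x. x \<in> space M \<Longrightarrow> V x \<ge> 0" and Wnn: "\<And>i x. x \<in> space M \<Longrightarrow> W i x \<ge> 0"
    and intV: "integrable M V"
  shows "AE x in M. \<forall>e>0. eventually (\<lambda>n. (\<Sum>i<n. W i x) / real n \<le> expectation V + e) sequentially"
proof -
  have "AE x in M. \<forall>K::nat. \<forall>e>0. eventually (\<lambda>n. (\<Sum>i<n. W i x) / real n
      \<le> expectation V + expectation (\<lambda>x. V x - min (V x) (real (Suc K))) + e) sequentially"
    by (subst AE_all_countable)
      (intro allI AE_eventually_mean_le_expectation_plus_excess[OF indep distr rvV Vnn Wnn intV] of_nat_0_less_iff[THEN iffD2] zero_less_Suc)
  then show ?thesis
  proof eventually_elim
    case (elim x)
    show ?case
    proof (intro allI impI)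
      fix e :: real assume e: "e > 0"
      have "eventually (\<lambda>K. expectation (\<lambda>x. V x - min (V x) (real (Suc K))) < e / 2) sequentially"
        using tendsto_expectation_excess_over_level[OF rvV Vnn intV, THEN LIMSEQ_Suc]
        by (rule order_tendstoD(2)) (use e in auto)
      then obtain K where "expectation (\<lambda>x. V x - min (V x) (real (Suc K))) < e / 2"
        using eventually_happens'[OF trivial_limit_sequentially] by blast
      moreover have "eventually (\<lambda>n. (\<Sum>i<n. W i x) / real n
          \<le> expectation V + expectation (\<lambda>x. V x - min (V x) (real (Suc K))) + e / 2) sequentially"
        using elim e by simp
      ultimately show "eventually (\<lambda>n. (\<Sum>i<n. W i x) / real n \<le> expectation V + e) sequentially"
        by (elim eventually_mono) linarith
    qed
  qed
qed

end

section \<open>Almost sure convergence of the estimator\<close>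

context prob_space
begin

lemma isCont_prob_less_of_lipschitz:
  fixes Y :: "'a \<Rightarrow> real"
  assumes [measurable]: "random_variable borel Y"
    and Lip: "\<And>x y. x > 0 \<Longrightarrow> y > 0 \<Longrightarrow>
      \<bar>prob {\<omega>\<in>space M. Y \<omega> \<le> x} - prob {\<omega>\<in>space M. Y \<omega> \<le> y}\<bar> \<le> L * \<bar>x - y\<bar>"
    and z: "z > 0"
  shows "isCont (\<lambda>z. prob {\<omega>\<in>space M. z < Y \<omega>}) z"
proof -
  define F where "F z = prob {\<omega>\<in>space M. Y \<omega> \<le> z}" for z
  have "\<bar>F 1 - F 2\<bar> \<le> L" using Lip[of 1 2] by (simp add: F_def)
  then have "0 \<le> L" by (meson abs_ge_zero order_trans)
  then have "lipschitz_on L {0<..} F"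
    unfolding lipschitz_on_def F_def dist_real_def using Lip by auto
  then have "isCont F z"
    using z by (auto dest!: lipschitz_on_continuous_on simp: continuous_on_eq_continuous_at)
  moreover have "prob {\<omega>\<in>space M. t < Y \<omega>} = 1 - F t" for t
  proof -
    have "{\<omega>\<in>space M. t < Y \<omega>} = space M - {\<omega>\<in>space M. Y \<omega> \<le> t}" by auto
    then show ?thesis unfolding F_def by (simp add: prob_compl)
  qed
  ultimately show ?thesis by simp
qed

lemma empirical_survival_tendsto:
  fixes Ys :: "nat \<Rightarrow> 'a \<Rightarrow> real" and Y :: "'a \<Rightarrow> real"
  assumes indep: "indep_vars (\<lambda>_. borel) Ys UNIV"
    and distr: "\<And>i. distr M borel (Ys i) = distr M borel Y"
    and [measurable]: "random_variable borel Y"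
    and cont: "\<And>z. z \<in> Z \<Longrightarrow> isCont (\<lambda>z. prob {\<omega>\<in>space M. z < Y \<omega>}) z"
  shows "AE x in M. \<forall>z\<in>Z. (\<lambda>n. real (count_above (map (\<lambda>i. Ys i x) [0..<n]) z) / real n)
            \<longlonglongrightarrow> prob {\<omega>\<in>space M. z < Y \<omega>}"
proof -
  have [measurable]: "\<And>i. random_variable borel (Ys i)"
    using indep unfolding indep_vars_def by auto
  define ind where "ind q v = (if q < v then 1 else 0 :: real)" for q v :: real
  have [measurable]: "ind q \<in> borel_measurable borel" for q unfolding ind_def by measurable
  have "AE x in M. (\<lambda>n. (\<Sum>i<n. ind q (Ys i x)) / real n) \<longlonglongrightarrow> expectation (\<lambda>x. ind q (Y x))" for q
  proof (rule strong_law_bounded[where a=0 and b=1])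
    show "indep_vars (\<lambda>_. borel) (\<lambda>i x. ind q (Ys i x)) UNIV"
      by (rule indep_vars_compose2[OF indep]) auto
    show "distr M borel (\<lambda>x. ind q (Ys i x)) = distr M borel (\<lambda>x. ind q (Y x))" for i
      by (rule distr_comp_eq[OF distr]) auto
  qed (auto simp: ind_def)
  moreover have "expectation (\<lambda>x. ind q (Y x)) = prob {\<omega>\<in>space M. q < Y \<omega>}" for q
  proof -
    have "expectation (\<lambda>x. ind q (Y x)) = expectation (indicator {\<omega>\<in>space M. q < Y \<omega>})"
      by (intro Bochner_Integration.integral_cong) (auto simp: ind_def indicator_def)
    then show ?thesis by (simp add: integral_indicator Int_absorb2)
  qed
  ultimately have "AE x in M. \<forall>q\<in>\<rat>.
      (\<lambda>n. (\<Sum>i<n. ind q (Ys i x)) / real n) \<longlonglongrightarrow> prob {\<omega>\<in>space M. q < Y \<omega>}"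
    by (intro AE_ball_countable' countable_rat) simp
  then show ?thesis
  proof eventually_elim
    case (elim x)
    show ?case
    proof
      fix z assume "z \<in> Z"
      show "(\<lambda>n. real (count_above (map (\<lambda>i. Ys i x) [0..<n]) z) / real n)
          \<longlonglongrightarrow> prob {\<omega>\<in>space M. z < Y \<omega>}"
      proof (rule tendsto_of_antimono_of_tendsto_rats[where
            F="\<lambda>n z. real (count_above (map (\<lambda>i. Ys i x) [0..<n]) z) / real n"
            and G="\<lambda>z. prob {\<omega>\<in>space M. z < Y \<omega>}", OF _ _ cont[OF \<open>z \<in> Z\<close>]])
        show "real (count_above (map (\<lambda>i. Ys i x) [0..<n]) r) / real n
            \<le> real (count_above (map (\<lambda>i. Ys i x) [0..<n]) z') / real n" if "z' \<le> r" for n z' r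
          using that by (intro divide_right_mono) (simp_all add: count_above_antimono)
        show "(\<lambda>n. real (count_above (map (\<lambda>i. Ys i x) [0..<n]) q) / real n)
            \<longlonglongrightarrow> prob {\<omega>\<in>space M. q < Y \<omega>}" if "q \<in> \<rat>" for q
          using elim that unfolding count_above_map_upt ind_def by blast
      qed
    qed
  qed
qed

lemma expectation_integral_upto_eq:
  fixes Y :: "'a \<Rightarrow> real" and k :: "real \<Rightarrow> real"
  assumes [measurable]: "random_variable borel Y" "k \<in> borel_measurable borel"
    and k_nn: "\<And>z. k z \<ge> 0"
    and int: "integrable lborel (\<lambda>z. indicator {0..} z * (prob {\<omega>\<in>space M. z < Y \<omega>} * k z))"
    and locint: "\<And>y. integrable lborel (\<lambda>z. indicator {0..} z * (if z < y then k z else 0))"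
  defines "\<phi> \<equiv> \<lambda>y. integral\<^sup>L lborel (\<lambda>z. indicator {0..} z * (if z < y then k z else 0))"
  shows "\<phi> \<in> borel_measurable borel" "\<And>y. \<phi> y \<ge> 0" "integrable M (\<lambda>x. \<phi> (Y x))"
    "expectation (\<lambda>x. \<phi> (Y x)) = integral\<^sup>L lborel (\<lambda>z. indicator {0..} z * (prob {\<omega>\<in>space M. z < Y \<omega>} * k z))"
proof -
  show \<phi>_nn: "\<phi> y \<ge> 0" for y
    unfolding \<phi>_def by (intro integral_nonneg_AE AE_I2) (auto simp: indicator_def k_nn)
  have "mono \<phi>"
    unfolding \<phi>_def by (intro monoI integral_mono locint) (auto simp: indicator_def k_nn)
  then show [measurable]: "\<phi> \<in> borel_measurable borel" by (rule borel_measurable_mono)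
  interpret pair_sigma_finite M lborel
    by (intro pair_sigma_finite.intro sigma_finite_measure_axioms sigma_finite_lborel)
  define B where "B = integral\<^sup>L lborel (\<lambda>z. indicator {0..} z * (prob {\<omega>\<in>space M. z < Y \<omega>} * k z))"
  have B_nn: "B \<ge> 0" unfolding B_def
    by (intro integral_nonneg_AE AE_I2) (auto simp: indicator_def k_nn)
  have inner: "(\<integral>\<^sup>+ x. ennreal (indicator {0..} z * (if z < Y x then k z else 0)) \<partial>M)
      = ennreal (indicator {0..} z * (prob {\<omega>\<in>space M. z < Y \<omega>} * k z))" for z
  proof -
    have "(\<integral>\<^sup>+ x. ennreal (indicator {0..} z * (if z < Y x then k z else 0)) \<partial>M)
        = (\<integral>\<^sup>+ x. ennreal (indicator {0..} z * k z) * indicator {\<omega>\<in>space M. z < Y \<omega>} x \<partial>M)"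
      by (intro nn_integral_cong) (auto simp: indicator_def)
    also have "\<dots> = ennreal (indicator {0..} z * (prob {\<omega>\<in>space M. z < Y \<omega>} * k z))"
      by (subst nn_integral_cmult_indicator) (simp_all add: emeasure_eq_measure ennreal_mult'[symmetric]
          mult_ac indicator_def k_nn)
    finally show ?thesis .
  qed
  \<comment> \<open>Tonelli: integrate first over the sample space, then over the level \<open>z\<close>\<close>
  have "(\<integral>\<^sup>+ x. ennreal (\<phi> (Y x)) \<partial>M)
      = (\<integral>\<^sup>+ x. (\<integral>\<^sup>+ z. ennreal (indicator {0..} z * (if z < Y x then k z else 0)) \<partial>lborel) \<partial>M)"
    unfolding \<phi>_def
    by (intro nn_integral_cong nn_integral_eq_integral[symmetric] locint AE_I2)
       (auto simp: indicator_def k_nn)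
  also have "\<dots> = (\<integral>\<^sup>+ z. (\<integral>\<^sup>+ x. ennreal (indicator {0..} z * (if z < Y x then k z else 0)) \<partial>M) \<partial>lborel)"
    by (rule Fubini'[symmetric]) measurable
  also have "\<dots> = ennreal B"
    unfolding inner B_def by (intro nn_integral_eq_integral int AE_I2) (auto simp: indicator_def k_nn)
  finally have nn: "(\<integral>\<^sup>+ x. ennreal (\<phi> (Y x)) \<partial>M) = ennreal B" .
  show "integrable M (\<lambda>x. \<phi> (Y x))"
    by (rule integrableI_nonneg) (use nn \<phi>_nn in auto)
  have "expectation (\<lambda>x. \<phi> (Y x)) = enn2real (\<integral>\<^sup>+ x. ennreal (\<phi> (Y x)) \<partial>M)"
    by (rule integral_eq_nn_integral) (use \<phi>_nn in auto)
  then show "expectation (\<lambda>x. \<phi> (Y x)) = integral\<^sup>L lborel (\<lambda>z. indicator {0..} z * (prob {\<omega>\<in>space M. z < Y \<omega>} * k z))"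
    using nn B_nn unfolding B_def by simp
qed

lemma AE_eventually_integral_empirical_survival_le:
  fixes Ys :: "nat \<Rightarrow> 'a \<Rightarrow> real" and Y :: "'a \<Rightarrow> real" and k :: "real \<Rightarrow> real"
  assumes indep: "indep_vars (\<lambda>_. borel) Ys UNIV"
    and distr: "\<And>i. distr M borel (Ys i) = distr M borel Y"
    and rvY[measurable]: "random_variable borel Y"
    and k_meas[measurable]: "k \<in> borel_measurable borel" and k_nn: "\<And>z. k z \<ge> 0"
    and int: "integrable lborel (\<lambda>z. indicator {0..} z * (prob {\<omega>\<in>space M. z < Y \<omega>} * k z))"
    and locint: "\<And>y. integrable lborel (\<lambda>z. indicator {0..} z * (if z < y then k z else 0))"
  shows "AE x in M. \<forall>e>0. eventually (\<lambda>n.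
      (LINT z|lborel. indicator {0..} z * (real (count_above (map (\<lambda>i. Ys i x) [0..<n]) z) / real n * k z))
      \<le> (LINT z|lborel. indicator {0..} z * (prob {\<omega>\<in>space M. z < Y \<omega>} * k z)) + e) sequentially"
proof -
  have [measurable]: "\<And>i. random_variable borel (Ys i)"
    using indep unfolding indep_vars_def by auto
  \<comment> \<open>the integral against the empirical survival function is the sample mean of \<open>\<phi>\<close>\<close>
  define \<phi> where "\<phi> = (\<lambda>y. LINT z|lborel. indicator {0..} z * (if z < y then k z else 0))"
  have \<phi>: "\<phi> \<in> borel_measurable borel" "\<And>y. \<phi> y \<ge> 0" "integrable M (\<lambda>x. \<phi> (Y x))"
    "expectation (\<lambda>x. \<phi> (Y x)) = (LINT z|lborel. indicator {0..} z * (prob {\<omega>\<in>space M. z < Y \<omega>} * k z))"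
    unfolding \<phi>_def by (rule expectation_integral_upto_eq[OF rvY k_meas k_nn int locint])+
  have "AE x in M. \<forall>e>0. eventually (\<lambda>n. (\<Sum>i<n. \<phi> (Ys i x)) / real n \<le> expectation (\<lambda>x. \<phi> (Y x)) + e) sequentially"
  proof (rule AE_eventually_mean_le_expectation)
    show "indep_vars (\<lambda>_. borel) (\<lambda>i x. \<phi> (Ys i x)) UNIV"
      using \<phi>(1) by (intro indep_vars_compose2[OF indep]) auto
    show "distr M borel (\<lambda>x. \<phi> (Ys i x)) = distr M borel (\<lambda>x. \<phi> (Y x))" for i
      using \<phi>(1) by (intro distr_comp_eq[OF distr]) auto
  qed (use \<phi> in auto)
  then show ?thesis
    unfolding integral_empirical_survival_mult(2)[OF locint] \<phi>(4)[symmetric] \<phi>_def .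
qed

lemma rank_weighted_sum_tendsto:
  fixes Ys :: "nat \<Rightarrow> 'a \<Rightarrow> real" and Y :: "'a \<Rightarrow> real" and w :: "real \<Rightarrow> real"
  assumes indep: "indep_vars (\<lambda>_. borel) Ys UNIV"
    and distr: "\<And>i. distr M borel (Ys i) = distr M borel Y"
    and rvY[measurable]: "random_variable borel Y"
    and Ysnn: "\<And>i x. x \<in> space M \<Longrightarrow> Ys i x \<ge> 0"
    and w: "weight_fn w" "holder_on01 \<alpha> H w"
    and \<alpha>: "0 < \<alpha>" "\<alpha> \<le> 1" and H: "H > 0" and \<gamma>: "0 < \<gamma>" "\<gamma> \<le> \<alpha>"
    and tail: "(\<integral>\<^sup>+ z. indicator {0..} z * ennreal (prob {\<omega>\<in>space M. z < Y \<omega>} powr \<gamma>) \<partial>lborel) < \<infinity>"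
    and Lip: "\<And>x y. x > 0 \<Longrightarrow> y > 0 \<Longrightarrow>
        \<bar>prob {\<omega>\<in>space M. Y \<omega> \<le> x} - prob {\<omega>\<in>space M. Y \<omega> \<le> y}\<bar> \<le> L * \<bar>x - y\<bar>"
  shows "AE x in M. (\<lambda>n. rank_weighted_sum w n (sort (map (\<lambda>i. Ys i x) [0..<n])))
           \<longlonglongrightarrow> (LINT z|lborel. indicator {0..} z * w (prob {\<omega>\<in>space M. z < Y \<omega>}))"
proof -
  define G where "G z = prob {\<omega>\<in>space M. z < Y \<omega>}" for z
  define a where "a z = H * envelope \<alpha> G z powr \<alpha>" for z
  define k where "k z = H * envelope \<alpha> G z powr (\<alpha> - 1)" for z
  have G01: "0 \<le> G z" "G z \<le> 1" for z unfolding G_def by auto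
  have G_meas[measurable]: "G \<in> borel_measurable borel" unfolding G_def[abs_def] by measurable
  have w_cont: "continuous_on {0..1} w" and w0: "w 0 = 0" using w(1) unfolding weight_fn_def by auto
  have tailG: "(\<integral>\<^sup>+ z. indicator {0..} z * ennreal (G z powr \<gamma>) \<partial>lborel) < \<infinity>"
    using tail by (simp add: G_def)
  have ai: "integrable lborel (\<lambda>z. indicator {0..} z * a z)"
    using integrable_mult_right[OF integrable_envelope_powr[OF \<alpha> \<gamma> G01 G_meas tailG], of H]
    by (simp add: a_def mult_ac)
  have bi: "integrable lborel (\<lambda>z. indicator {0..} z * (G z * k z))"
    using integrable_mult_right[OF integrable_mult_envelope_powr[OF \<alpha> \<gamma> G01 G_meas tailG], of H]
    by (simp add: k_def mult_ac)
  have locint: "integrable lborel (\<lambda>z. indicator {0..} z * (if z < y then k z else 0))" for y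
    using integrable_mult_right[OF integrable_envelope_powr_upto[OF \<alpha> G_meas, of y], of H]
    by (simp add: k_def if_distrib mult_ac cong: if_cong)
  have "AE x in M. \<forall>e>0. eventually (\<lambda>n.
      (LINT z|lborel. indicator {0..} z * (real (count_above (map (\<lambda>i. Ys i x) [0..<n]) z) / real n * k z))
      \<le> (LINT z|lborel. indicator {0..} z * (G z * k z)) + e) sequentially"
    unfolding G_def using H
    by (intro AE_eventually_integral_empirical_survival_le[OF indep distr rvY] locint bi[unfolded G_def])
      (auto simp: k_def)
  moreover have "AE x in M. \<forall>z\<in>{0<..}. (\<lambda>n. real (count_above (map (\<lambda>i. Ys i x) [0..<n]) z) / real n) \<longlonglongrightarrow> G z"
    unfolding G_def
    by (rule empirical_survival_tendsto[OF indep distr rvY isCont_prob_less_of_lipschitz[OF rvY Lip]]) auto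
  ultimately show ?thesis
    using AE_space
  proof eventually_elim
    case (elim x)
    define Gh where "Gh n z = real (count_above (map (\<lambda>i. Ys i x) [0..<n]) z) / real n" for n z
    have Gh01: "Gh n z \<in> {0..1}" for n z
      using count_above_le_length[of "map (\<lambda>i. Ys i x) [0..<n]" z]
      by (cases "n = 0") (auto simp: Gh_def divide_le_eq_1)
    have est: "rank_weighted_sum w n (sort (map (\<lambda>i. Ys i x) [0..<n])) = (LINT z|lborel. indicator {0..} z * w (Gh n z))"
      and fi: "integrable lborel (\<lambda>z. indicator {0..} z * w (Gh n z))" for n
      using rank_weighted_sum_eq_integral[of "sort (map (\<lambda>i. Ys i x) [0..<n])" w n] Ysnn elim(3) w0
      by (auto simp: Gh_def)
    have "(\<lambda>n. LINT z|lborel. indicator {0..} z * w (Gh n z)) \<longlonglongrightarrow> (LINT z|lborel. indicator {0..} z * w (G z))"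
    proof (rule integral_comp_tendsto_of_dominated[OF w_cont Gh01 _ _ _ fi _ ai bi])
      show "(\<lambda>n. Gh n z) \<longlonglongrightarrow> G z" if "z > 0" for z using elim(2) that by (simp add: Gh_def)
      show "\<bar>w p\<bar> \<le> a z + p * k z" if "p \<in> {0..1}" for p z
      proof -
        have "\<bar>w p\<bar> \<le> H * (envelope \<alpha> G z powr \<alpha> + p * envelope \<alpha> G z powr (\<alpha> - 1))"
          using H that by (intro holder_abs_le_powr_split[OF w(2) w0 \<alpha>] envelope_pos) auto
        then show ?thesis by (simp add: a_def k_def algebra_simps)
      qed
      show "(\<lambda>z. indicator {0..} z * w (G z)) \<in> borel_measurable lborel"
        using borel_measurable_continuous_on_comp_unit[OF w_cont G_meas] G01 by simp
      show "integrable lborel (\<lambda>z. indicator {0..} z * (Gh n z * k z))" for n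
        unfolding Gh_def by (rule integral_empirical_survival_mult(1)[OF locint])
      show "eventually (\<lambda>n. (LINT z|lborel. indicator {0..} z * (Gh n z * k z))
          \<le> (LINT z|lborel. indicator {0..} z * (G z * k z)) + e) sequentially" if "e > 0" for e
        using elim(1) that unfolding Gh_def by blast
    qed (use G01 in simp)
    then show ?case unfolding est G_def .
  qed
qed

lemma rank_weighted_sum_comp_tendsto:
  fixes Xs :: "nat \<Rightarrow> 'a \<Rightarrow> real" and X :: "'a \<Rightarrow> real" and u w :: "real \<Rightarrow> real"
  assumes indep: "indep_vars (\<lambda>_. borel) Xs UNIV"
    and distr: "\<And>i. distr M borel (Xs i) = distr M borel X"
    and [measurable]: "random_variable borel X"
    and u: "continuous_on UNIV u" "\<And>x. u x \<ge> 0"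
    and w: "weight_fn w" "holder_on01 \<alpha> H w"
    and \<alpha>: "0 < \<alpha>" "\<alpha> \<le> 1" and H: "H > 0" and \<gamma>: "0 < \<gamma>" "\<gamma> \<le> \<alpha>"
    and tail: "(\<integral>\<^sup>+ z. indicator {0..} z * ennreal (prob {\<omega>\<in>space M. z < u (X \<omega>)} powr \<gamma>) \<partial>lborel) < \<infinity>"
    and Lip: "\<And>x y. x > 0 \<Longrightarrow> y > 0 \<Longrightarrow>
        \<bar>prob {\<omega>\<in>space M. u (X \<omega>) \<le> x} - prob {\<omega>\<in>space M. u (X \<omega>) \<le> y}\<bar> \<le> L * \<bar>x - y\<bar>"
  shows "AE x in M. (\<lambda>n. rank_weighted_sum w n (sort (map (\<lambda>i. u (Xs i x)) [0..<n])))
           \<longlonglongrightarrow> (LINT z|lborel. indicator {0..} z * w (prob {\<omega>\<in>space M. z < u (X \<omega>)}))"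
proof (rule rank_weighted_sum_tendsto[OF _ _ _ _ w \<alpha> H \<gamma> tail Lip])
  have [measurable]: "u \<in> borel_measurable borel" by (rule borel_measurable_continuous_onI[OF u(1)])
  show "indep_vars (\<lambda>_. borel) (\<lambda>i x. u (Xs i x)) UNIV"
    by (rule indep_vars_compose2[OF indep]) auto
  show "distr M borel (\<lambda>x. u (Xs i x)) = distr M borel (\<lambda>x. u (X x))" for i
    using indep unfolding indep_vars_def by (intro distr_comp_eq[OF distr]) auto
  show "random_variable borel (\<lambda>x. u (X x))" by measurable
qed (use u(2) in auto)

end

theorem proposition1:
  fixes M :: "'a measure"
    and X :: "'a \<Rightarrow> real" and Xs :: "nat \<Rightarrow> 'a \<Rightarrow> real"
    and wp wm up um :: "real \<Rightarrow> real"
    and \<alpha> H \<gamma> Lp Lm :: real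
  assumes "prob_space M"
    and X_rv: "X \<in> borel_measurable M"
    and Xs_rv: "\<And>i. Xs i \<in> borel_measurable M"
    and Xs_indep: "prob_space.indep_vars M (\<lambda>_. borel) Xs UNIV"
    and Xs_distr: "\<And>i. distr M borel (Xs i) = distr M borel X"
    and wp: "weight_fn wp" and wm: "weight_fn wm"
    and up_cont: "continuous_on UNIV up" and um_cont: "continuous_on UNIV um"
    and up_nonneg: "\<And>x. up x \<ge> 0" and um_nonneg: "\<And>x. um x \<ge> 0"
    and up_strict: "strict_mono_on {0..} up"
    and um_strict: "\<And>x y. x < y \<Longrightarrow> y \<le> 0 \<Longrightarrow> um y < um x"
    and \<alpha>: "0 < \<alpha>" "\<alpha> \<le> 1" and H: "H > 0"
    and hp: "holder_on01 \<alpha> H wp" and hm: "holder_on01 \<alpha> H wm"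
    and \<gamma>: "0 < \<gamma>" "\<gamma> \<le> \<alpha>"
    and intp: "(\<integral>\<^sup>+ z. indicator {0..} z *
                 ennreal (measure M {\<omega> \<in> space M. up (X \<omega>) > z} powr \<gamma>) \<partial>lborel) < \<infinity>"
    and intm: "(\<integral>\<^sup>+ z. indicator {0..} z *
                 ennreal (measure M {\<omega> \<in> space M. um (X \<omega>) > z} powr \<gamma>) \<partial>lborel) < \<infinity>"
    and Lip_p: "\<And>x y. x > 0 \<Longrightarrow> y > 0 \<Longrightarrow>
        \<bar>measure M {\<omega> \<in> space M. up (X \<omega>) \<le> x} - measure M {\<omega> \<in> space M. up (X \<omega>) \<le> y}\<bar>
          \<le> Lp * \<bar>x - y\<bar>"
    and Lip_m: "\<And>x y. x > 0 \<Longrightarrow> y > 0 \<Longrightarrow>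
        \<bar>measure M {\<omega> \<in> space M. um (X \<omega>) \<le> x} - measure M {\<omega> \<in> space M. um (X \<omega>) \<le> y}\<bar>
          \<le> Lm * \<bar>x - y\<bar>"
  shows "AE \<omega> in M. (\<lambda>n. cpt_est wp wm up um (map (\<lambda>i. Xs i \<omega>) [0..<n]))
                        \<longlonglongrightarrow> cpt_value M wp wm up um X"
proof -
  interpret prob_space M by fact
  have "cpt_est wp wm up um (map (\<lambda>i. Xs i \<omega>) [0..<n]) =
      rank_weighted_sum wp n (sort (map (\<lambda>i. up (Xs i \<omega>)) [0..<n]))
      - rank_weighted_sum wm n (sort (map (\<lambda>i. um (Xs i \<omega>)) [0..<n]))" for \<omega> n
    unfolding cpt_est_def rank_weighted_sum_def Let_def by (simp add: comp_def)
  moreover have "cpt_value M wp wm up um X =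
      (LINT z|lborel. indicator {0..} z * wp (prob {\<omega>\<in>space M. z < up (X \<omega>)}))
      - (LINT z|lborel. indicator {0..} z * wm (prob {\<omega>\<in>space M. z < um (X \<omega>)}))"
    unfolding cpt_value_def set_lebesgue_integral_def by simp
  ultimately show ?thesis
    using rank_weighted_sum_comp_tendsto[OF Xs_indep Xs_distr X_rv up_cont up_nonneg wp hp \<alpha> H \<gamma> intp Lip_p]
      rank_weighted_sum_comp_tendsto[OF Xs_indep Xs_distr X_rv um_cont um_nonneg wm hm \<alpha> H \<gamma> intm Lip_m]
    by (auto elim!: eventually_elim2 intro: tendsto_diff)
qed

end
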